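(* Let $\Phi$ be a random formula drawn from the weighted geometric model on $\mathbb T^d$ equipped with a $\mathfrak p$-norm, with temperature $0<T<1$, and with $\max_{v}w_v/W\in o(1)$. Then each clause $c$ of $\Phi$ is nice with probability $\Omega(1)$ (bounded below by a positive constant for all sufficiently large $n$). Consequently the expected number of nice clauses of $\Phi$ is $\Theta(m)$.
   Context: $\mathbb T^d$ is $[0,1]^d$ with opposite faces identified ($d$ a fixed constant), with distance $\mathrm{dist}(p,q)=\left(\sum_{i=1}^d|p_i-q_i|_\circ^{\mathfrak p}\right)^{1/\mathfrak p}$ (and $\max_i|p_i-q_i|_\circ$ for $\mathfrak p=\infty$), where $|a-b|_\circ=\min\{|a-b|,1-|a-b|\}$ and $\mathfrak p\in\mathbb N^+\cup\{\infty\}$ is fixed. Weighted geometric $k$-SAT model ($k$ constant): $n$ variables with weights $w_v\ge1$, minimum $1$, total $W=\sum_v w_v$, and $m$ clauses; all get independent uniformly random positions in $\mathbb T^d$. Connection weight $X(c,v)=\left(w_v/\mathrm{dist}(c,v)^d\right)^{1/T}$. Each clause draws $k$ variables one after another without repetition, each draw among the remaining variables with probability proportional to $X(c,v)$; signs are chosen among the $2^k$ patterns (details irrelevant here). A clause $c$ is nice if, for each $j\in[k]$, the $j$-th variable drawn for $c$ is the variable with the $j$-th highest connection weight with $c$. *)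

theory Defs
  imports "HOL-Probability.Probability" "HOL-Library.Extended_Nat"
begin

text \<open>Points of the torus T^d are represented as functions nat => real, of which
  only the coordinates 0..d-1 matter; each coordinate is uniform on [0,1].\<close>

definition torus :: "nat \<Rightarrow> (nat \<Rightarrow> real) measure" where
  "torus d = PiM {..<d} (\<lambda>_. uniform_measure lborel {0..1::real})"

definition circ_dist :: "real \<Rightarrow> real \<Rightarrow> real" where
  "circ_dist a b = min \<bar>a - b\<bar> (1 - \<bar>a - b\<bar>)"

definition torus_dist :: "nat \<Rightarrow> enat \<Rightarrow> (nat \<Rightarrow> real) \<Rightarrow> (nat \<Rightarrow> real) \<Rightarrow> real" where
  "torus_dist d p x y =
     (case p of
        enat q \<Rightarrow> (\<Sum>i<d. circ_dist (x i) (y i) ^ q) powr (1 / real q)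
      | \<infinity> \<Rightarrow> Max (insert 0 {circ_dist (x i) (y i) | i. i < d}))"

definition conn_weight ::
  "nat \<Rightarrow> enat \<Rightarrow> real \<Rightarrow> real \<Rightarrow> (nat \<Rightarrow> real) \<Rightarrow> (nat \<Rightarrow> real) \<Rightarrow> real" where
  "conn_weight d p T wv c xv = (wv / torus_dist d p c xv ^ d) powr (1 / T)"

text \<open>Probability that the sequential weighted draw without repetition from S
  (each draw proportional to X among the remaining elements) produces exactly
  the sequence us.\<close>
fun seq_prob :: "(nat \<Rightarrow> real) \<Rightarrow> nat set \<Rightarrow> nat list \<Rightarrow> real" where
  "seq_prob X S [] = 1"
| "seq_prob X S (u # us) =
     (if u \<in> S then X u / (\<Sum>v\<in>S. X v) * seq_prob X (S - {u}) us else 0)"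

text \<open>A drawn sequence us is nice if, for each j, its j-th entry is the variable
  with the j-th highest connection weight, i.e. it has strictly larger weight
  than every variable not among the first j drawn.\<close>
definition nice_seq :: "(nat \<Rightarrow> real) \<Rightarrow> nat set \<Rightarrow> nat list \<Rightarrow> bool" where
  "nice_seq X S us \<longleftrightarrow>
     (\<forall>j < length us. \<forall>v \<in> S - set (take (Suc j) us). X v < X (us ! j))"

definition nice_prob_given ::
  "nat \<Rightarrow> enat \<Rightarrow> real \<Rightarrow> nat \<Rightarrow> nat \<Rightarrow> (nat \<Rightarrow> real) \<Rightarrow> (nat \<Rightarrow> nat \<Rightarrow> real)
     \<Rightarrow> (nat \<Rightarrow> real) \<Rightarrow> real" where
  "nice_prob_given d p T k n w xs c =
     (let X = (\<lambda>v. conn_weight d p T (w v) c (xs v)) in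
      \<Sum>us \<in> {us. distinct us \<and> length us = k \<and> set us \<subseteq> {..<n} \<and> nice_seq X {..<n} us}.
        seq_prob X {..<n} us)"

definition clause_nice_prob ::
  "nat \<Rightarrow> enat \<Rightarrow> real \<Rightarrow> nat \<Rightarrow> nat \<Rightarrow> (nat \<Rightarrow> real) \<Rightarrow> real" where
  "clause_nice_prob d p T k n w =
     (\<integral>z. nice_prob_given d p T k n w (snd z) (fst z)
        \<partial>(torus d \<Otimes>\<^sub>M PiM {..<n} (\<lambda>_. torus d)))"

definition expected_nice ::
  "nat \<Rightarrow> enat \<Rightarrow> real \<Rightarrow> nat \<Rightarrow> nat \<Rightarrow> nat \<Rightarrow> (nat \<Rightarrow> real) \<Rightarrow> real" where
  "expected_nice d p T k n m w =
     (\<integral>z. (\<Sum>j<m. nice_prob_given d p T k n w (snd z) (fst z j))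
        \<partial>(PiM {..<m} (\<lambda>_. torus d) \<Otimes>\<^sub>M PiM {..<n} (\<lambda>_. torus d)))"

end

theory Submission
  imports Defs
begin

text \<open>Fix the clause position \<open>c\<close> and let \<open>W\<close> be the total weight. Call variable \<open>v\<close> near at level
  \<open>y\<close> if \<open>w\<^sub>v / dist(c,v)\<^sup>d > y\<close>; this is a ball of measure between \<open>w\<^sub>v / (d\<^sup>d y)\<close> and \<open>6\<^sup>d w\<^sub>v / y\<close>.
  Along geometric scales \<open>\<sigma>\<^sub>0 > \<sigma>\<^sub>1 > \<dots> > \<sigma>\<^sub>k \<approx> W\<close>, consider for every list \<open>u\<^sub>0, \<dots>, u\<^sub>k\<^sub>-\<^sub>1\<close>
  of distinct variables the event that \<open>u\<^sub>j\<close> is near at level \<open>\<sigma>\<^sub>j\<^sub>+\<^sub>1\<close> but not at level \<open>\<sigma>\<^sub>j\<close>, while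
  no other variable is near at level \<open>\<sigma>\<^sub>k\<close>. These events are disjoint, and because
  \<open>max w\<^sub>v / W\<close> is small their union has probability bounded below. On such an event the
  connection weights of \<open>u\<^sub>0, \<dots>, u\<^sub>k\<^sub>-\<^sub>1\<close> strictly decrease and dominate all others, so the clause
  is nice as soon as the draws pick them in order; each of these draws has probability at least
  \<open>1/(1 + k + M)\<close> provided the total connection weight of the remaining variables is at most
  \<open>M\<close> times the threshold at level \<open>\<sigma>\<^sub>k\<close>. A dyadic decomposition shows that this remaining weight
  has expectation of the order of that threshold, because \<open>T < 1\<close> makes \<open>\<Sum>\<^sub>i (2 \<cdot> 2\<^sup>-\<^sup>1\<^sup>/\<^sup>T)\<^sup>i\<close>
  converge; a Markov-type correction therefore keeps a constant fraction of the probability.\<close>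

section \<open>Sequential weighted draws\<close>

definition distinct_lists :: "nat \<Rightarrow> 'a set \<Rightarrow> 'a list set" where
  "distinct_lists k S = {us. distinct us \<and> length us = k \<and> set us \<subseteq> S}"

lemma finite_distinct_lists: "finite S \<Longrightarrow> finite (distinct_lists k S)"
proof -
  assume "finite S"
  have "distinct_lists k S \<subseteq> {xs. set xs \<subseteq> S \<and> length xs = k}" by (auto simp: distinct_lists_def)
  then show ?thesis using finite_lists_length_eq[OF \<open>finite S\<close>] finite_subset by blast
qed

lemma distinct_lists_0 [simp]: "distinct_lists 0 S = {[]}"
  by (auto simp: distinct_lists_def)

lemma distinct_lists_Suc_Cons:
  "distinct_lists (Suc k) S = (\<lambda>(u, us). u # us) ` Sigma S (\<lambda>u. distinct_lists k (S - {u}))"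
proof (intro set_eqI iffI)
  fix xs assume "xs \<in> distinct_lists (Suc k) S"
  then obtain u us where "xs = u # us" "u \<in> S" "us \<in> distinct_lists k (S - {u})"
    by (cases xs) (auto simp: distinct_lists_def)
  then show "xs \<in> (\<lambda>(u, us). u # us) ` Sigma S (\<lambda>u. distinct_lists k (S - {u}))" by force
qed (auto simp: distinct_lists_def)

lemma distinct_lists_Suc_snoc:
  "distinct_lists (Suc k) S = (\<lambda>(us, v). us @ [v]) ` Sigma (distinct_lists k S) (\<lambda>us. S - set us)"
proof (intro set_eqI iffI)
  fix xs assume xs: "xs \<in> distinct_lists (Suc k) S"
  then have "xs \<noteq> []" by (auto simp: distinct_lists_def)
  then obtain us v where "xs = us @ [v]" by (metis rev_exhaust)
  with xs show "xs \<in> (\<lambda>(us, v). us @ [v]) ` Sigma (distinct_lists k S) (\<lambda>us. S - set us)"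
    by (force simp: distinct_lists_def)
qed (auto simp: distinct_lists_def)

lemma seq_prob_nonneg: "(\<And>v. v \<in> S \<Longrightarrow> X v \<ge> 0) \<Longrightarrow> seq_prob X S us \<ge> 0"
proof (induction us arbitrary: S)
  case (Cons u us)
  have "seq_prob X (S - {u}) us \<ge> 0" using Cons.prems by (intro Cons.IH) auto
  moreover have "(\<Sum>v\<in>S. X v) \<ge> 0" using Cons.prems by (simp add: sum_nonneg)
  ultimately show ?case using Cons.prems by auto
qed simp

lemma sum_seq_prob_le_1:
  assumes "finite S" "\<And>v. v \<in> S \<Longrightarrow> X v \<ge> 0"
  shows "(\<Sum>us\<in>distinct_lists k S. seq_prob X S us) \<le> 1"
  using assms
proof (induction k arbitrary: S)
  case (Suc k)
  let ?p = "\<lambda>u. X u / (\<Sum>v\<in>S. X v)"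
  have inj: "inj_on (\<lambda>(u, us). u # us) (Sigma S (\<lambda>u. distinct_lists k (S - {u})))"
    by (auto simp: inj_on_def)
  have "(\<Sum>us\<in>distinct_lists (Suc k) S. seq_prob X S us)
      = (\<Sum>u\<in>S. \<Sum>us\<in>distinct_lists k (S - {u}). seq_prob X S (u # us))"
    unfolding distinct_lists_Suc_Cons sum.reindex[OF inj] using Suc.prems
    by (subst sum.Sigma) (auto intro: finite_distinct_lists simp: case_prod_unfold comp_def)
  also have "\<dots> = (\<Sum>u\<in>S. ?p u * (\<Sum>us\<in>distinct_lists k (S - {u}). seq_prob X (S - {u}) us))"
    by (simp add: sum_distrib_left)
  also have "\<dots> \<le> (\<Sum>u\<in>S. ?p u * 1)"
    using Suc.prems by (intro sum_mono mult_left_mono Suc.IH) (auto simp: sum_nonneg)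
  also have "\<dots> \<le> 1"
    by (cases "(\<Sum>v\<in>S. X v) = 0") (simp_all add: sum_divide_distrib[symmetric])
  finally show ?case .
qed simp

lemma seq_prob_ge_power:
  assumes "distinct us" "set us \<subseteq> S" "finite S" "\<And>v. v \<in> S \<Longrightarrow> X v \<ge> 0" "\<theta> \<ge> 0"
    and "\<And>j. j < length us \<Longrightarrow> X (us ! j) > 0"
    and "\<And>j. j < length us \<Longrightarrow> X (us ! j) \<ge> \<theta> * (\<Sum>v\<in>S - set (take j us). X v)"
  shows "seq_prob X S us \<ge> \<theta> ^ length us"
  using assms
proof (induction us arbitrary: S)
  case (Cons u us)
  have uS: "u \<in> S" using Cons.prems by auto
  have Xu: "X u > 0" using Cons.prems(6)[of 0] by simp
  have sum_pos: "(\<Sum>v\<in>S. X v) > 0"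
    using Xu member_le_sum[of u S X] uS Cons.prems(3,4) by fastforce
  have first: "X u / (\<Sum>v\<in>S. X v) \<ge> \<theta>"
    using Cons.prems(7)[of 0] sum_pos by (simp add: field_simps)
  have rest: "seq_prob X (S - {u}) us \<ge> \<theta> ^ length us"
  proof (rule Cons.IH)
    fix j assume j: "j < length us"
    have "S - {u} - set (take j us) = S - set (take (Suc j) (u # us))" by auto
    then show "\<theta> * (\<Sum>v\<in>S - {u} - set (take j us). X v) \<le> X (us ! j)"
      using Cons.prems(7)[of "Suc j"] j by simp
    show "X (us ! j) > 0" using Cons.prems(6)[of "Suc j"] j by simp
  qed (use Cons.prems in auto)
  have "\<theta> ^ length (u # us) \<le> X u / (\<Sum>v\<in>S. X v) * seq_prob X (S - {u}) us"
    using mult_mono[OF first rest] Cons.prems(5) sum_pos Xu by simp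
  then show ?case using uS by simp
qed simp

lemma nice_prob_given_conv_sum:
  "nice_prob_given d p T k n w xs c =
    (\<Sum>us\<in>distinct_lists k {..<n}. if nice_seq (\<lambda>v. conn_weight d p T (w v) c (xs v)) {..<n} us
        then seq_prob (\<lambda>v. conn_weight d p T (w v) c (xs v)) {..<n} us else 0)"
  unfolding nice_prob_given_def Let_def
  by (subst sum.inter_filter[symmetric])
     (auto intro: finite_distinct_lists[unfolded distinct_lists_def] intro!: sum.cong
       simp: distinct_lists_def)

lemma conn_weight_nonneg: "conn_weight d p T wv c x \<ge> 0"
  by (simp add: conn_weight_def)

lemma seq_prob_conn_weight_nonneg: "seq_prob (\<lambda>v. conn_weight d p T (w v) c (xs v)) S us \<ge> 0"
  by (rule seq_prob_nonneg) (simp add: conn_weight_nonneg)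

lemma nice_prob_given_nonneg: "nice_prob_given d p T k n w xs c \<ge> 0"
  unfolding nice_prob_given_conv_sum by (intro sum_nonneg) (simp add: seq_prob_conn_weight_nonneg)

lemma nice_prob_given_le_1: "nice_prob_given d p T k n w xs c \<le> 1"
proof -
  let ?X = "\<lambda>v. conn_weight d p T (w v) c (xs v)"
  have "nice_prob_given d p T k n w xs c \<le> (\<Sum>us\<in>distinct_lists k {..<n}. seq_prob ?X {..<n} us)"
    unfolding nice_prob_given_conv_sum by (intro sum_mono) (simp add: seq_prob_conn_weight_nonneg)
  also have "\<dots> \<le> 1" by (rule sum_seq_prob_le_1) (auto simp: conn_weight_nonneg)
  finally show ?thesis .
qed

lemma seq_prob_le_nice_prob_given:
  assumes "us \<in> distinct_lists k {..<n}" "nice_seq (\<lambda>v. conn_weight d p T (w v) c (xs v)) {..<n} us"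
  shows "seq_prob (\<lambda>v. conn_weight d p T (w v) c (xs v)) {..<n} us \<le> nice_prob_given d p T k n w xs c"
  unfolding nice_prob_given_conv_sum
  using member_le_sum[OF assms(1), of "\<lambda>us. if nice_seq (\<lambda>v. conn_weight d p T (w v) c (xs v)) {..<n} us
        then seq_prob (\<lambda>v. conn_weight d p T (w v) c (xs v)) {..<n} us else 0"] assms
  by (simp add: finite_distinct_lists seq_prob_conn_weight_nonneg)

section \<open>Draws separated by thresholds\<close>

context
  fixes X :: "nat \<Rightarrow> real" and S :: "nat set" and us :: "nat list" and k :: nat
    and \<tau> :: "nat \<Rightarrow> real"
  assumes us: "us \<in> distinct_lists k S"
    and threshold_antimono: "\<And>i j. i \<le> j \<Longrightarrow> j \<le> k \<Longrightarrow> \<tau> j \<le> \<tau> i"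
    and below_threshold: "\<And>j. j < k \<Longrightarrow> 0 < j \<Longrightarrow> X (us ! j) \<le> \<tau> j"
    and rest_below: "\<And>v. v \<in> S - set us \<Longrightarrow> X v \<le> \<tau> k"
begin

lemma weight_le_threshold_after_draw:
  assumes j: "j < k" and v: "v \<in> S - set (take (Suc j) us)"
  shows "X v \<le> \<tau> (Suc j)"
proof (cases "v \<in> set us")
  case True
  have len: "length us = k" using us by (simp add: distinct_lists_def)
  then obtain i where i: "i < k" "us ! i = v" using True by (auto simp: in_set_conv_nth)
  have "\<not> i \<le> j"
  proof
    assume "i \<le> j"
    then have "us ! i \<in> set (take (Suc j) us)" using i len
      by (metis in_set_conv_nth length_take min_less_iff_conj nth_take less_Suc_eq_le)
    with v i show False by auto
  qed
  then have "X v \<le> \<tau> i" using below_threshold[of i] i by auto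
  also have "\<dots> \<le> \<tau> (Suc j)" using threshold_antimono \<open>\<not> i \<le> j\<close> i by auto
  finally show ?thesis .
next
  case False
  then have "X v \<le> \<tau> k" using rest_below v by auto
  also have "\<dots> \<le> \<tau> (Suc j)" using threshold_antimono j by auto
  finally show ?thesis .
qed

context
  assumes above_threshold: "\<And>j. j < k \<Longrightarrow> \<tau> (Suc j) < X (us ! j)"
begin

lemma nice_seq_if_separated: "nice_seq X S us"
proof -
  have "length us = k" using us by (simp add: distinct_lists_def)
  then show ?thesis unfolding nice_seq_def
    using weight_le_threshold_after_draw above_threshold by (meson order_le_less_trans)
qed

context
  fixes M :: real
  assumes finite: "finite S" and X_nonneg: "\<And>v. v \<in> S \<Longrightarrow> X v \<ge> 0"
    and M_nonneg: "M \<ge> 0" and threshold_nonneg: "\<tau> k \<ge> 0"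
    and rest_sum_below: "(\<Sum>v\<in>S - set us. X v) \<le> M * \<tau> k"
begin

text \<open>Before the \<open>j\<close>-th draw the available weight consists of \<open>X (us ! j)\<close>, at most \<open>k\<close> listed
  elements and the rest, and all but the first lie below \<open>\<tau> (j + 1) < X (us ! j)\<close>.\<close>
lemma available_weight_le:
  assumes j: "j < k"
  shows "(\<Sum>v\<in>S - set (take j us). X v) \<le> (1 + real k + M) * X (us ! j)"
proof -
  have len: "length us = k" and sub: "set us \<subseteq> S" and dist: "distinct us"
    using us by (auto simp: distinct_lists_def)
  have jl: "j < length us" using j len by simp
  have tS: "\<tau> (Suc j) \<ge> 0" using threshold_antimono[of "Suc j" k] j threshold_nonneg by simp
  have usj: "us ! j \<notin> set (take j us)"
    using distinct_take[OF dist, of "Suc j"] take_Suc_conv_app_nth[OF jl] by simp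
  have remove_first: "S - set (take j us) = insert (us ! j) (S - set (take (Suc j) us))"
    using sub jl usj by (auto simp: take_Suc_conv_app_nth[OF jl])
  have split_first: "(\<Sum>v\<in>S - set (take j us). X v)
      = X (us ! j) + (\<Sum>v\<in>S - set (take (Suc j) us). X v)"
    unfolding remove_first using finite by (subst sum.insert) (auto simp: take_Suc_conv_app_nth[OF jl])
  have split_listed: "S - set (take (Suc j) us) = (set us - set (take (Suc j) us)) \<union> (S - set us)"
    using sub set_take_subset[of "Suc j" us] by auto
  have split_rest: "(\<Sum>v\<in>S - set (take (Suc j) us). X v)
      = (\<Sum>v\<in>set us - set (take (Suc j) us). X v) + (\<Sum>v\<in>S - set us. X v)"
    unfolding split_listed using finite sub by (subst sum.union_disjoint) (auto intro: finite_subset)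
  have "(\<Sum>v\<in>set us - set (take (Suc j) us). X v) \<le> real (card (set us - set (take (Suc j) us))) * \<tau> (Suc j)"
    by (rule sum_bounded_above) (use weight_le_threshold_after_draw j sub in auto)
  also have "\<dots> \<le> real k * \<tau> (Suc j)"
    using card_mono[of "set us" "set us - set (take (Suc j) us)"] len card_length[of us] tS
    by (intro mult_right_mono) auto
  finally have listed: "(\<Sum>v\<in>set us - set (take (Suc j) us). X v) \<le> real k * \<tau> (Suc j)" .
  have "M * \<tau> k \<le> M * \<tau> (Suc j)"
    using threshold_antimono[of "Suc j" k] j M_nonneg by (intro mult_left_mono) auto
  then have "(\<Sum>v\<in>S - set (take (Suc j) us). X v) \<le> real k * \<tau> (Suc j) + M * \<tau> (Suc j)"
    using split_rest listed rest_sum_below by linarith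
  also have "\<dots> = (real k + M) * \<tau> (Suc j)" by (simp add: distrib_right)
  also have "\<dots> \<le> (real k + M) * X (us ! j)"
    using above_threshold[OF j] M_nonneg by (intro mult_left_mono) auto
  finally have "(\<Sum>v\<in>S - set (take (Suc j) us). X v) \<le> (real k + M) * X (us ! j)" .
  moreover have "(1 + real k + M) * X (us ! j) = X (us ! j) + (real k + M) * X (us ! j)"
    by (simp add: distrib_right)
  ultimately show ?thesis using split_first by linarith
qed

lemma seq_prob_ge_if_separated: "seq_prob X S us \<ge> (1 / (1 + real k + M)) ^ k"
proof -
  have len: "length us = k" using us by (simp add: distinct_lists_def)
  have "seq_prob X S us \<ge> (1 / (1 + real k + M)) ^ length us"
  proof (rule seq_prob_ge_power)
    fix j assume "j < length us"
    then have j: "j < k" using len by simp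
    show "X (us ! j) > 0"
      using above_threshold[OF j] threshold_antimono[of "Suc j" k] j threshold_nonneg by linarith
    show "1 / (1 + real k + M) * (\<Sum>v\<in>S - set (take j us). X v) \<le> X (us ! j)"
      using available_weight_le[OF j] M_nonneg by (simp add: field_simps)
  qed (use us finite X_nonneg M_nonneg in \<open>auto simp: distinct_lists_def\<close>)
  then show ?thesis using len by simp
qed

end

end

end

text \<open>Choosing the \<open>j\<close>-th entry among the elements not yet used loses at most \<open>j \<epsilon>\<close> of the
  mass \<open>P j\<close> available at step \<open>j\<close>.\<close>
lemma sum_prod_distinct_lists_ge:
  fixes f :: "nat \<Rightarrow> 'a \<Rightarrow> real"
  assumes S: "finite S" and f_nonneg: "\<And>j v. f j v \<ge> 0" and f_le: "\<And>j v. v \<in> S \<Longrightarrow> f j v \<le> \<epsilon>"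
    and "\<epsilon> \<ge> 0"
    and mass: "\<And>j. j < k \<Longrightarrow> P j \<le> (\<Sum>v\<in>S. f j v)"
    and mass_remaining: "\<And>j. j < k \<Longrightarrow> P j - real j * \<epsilon> \<ge> 0"
  shows "(\<Sum>l\<in>distinct_lists k S. \<Prod>j<k. f j (l ! j)) \<ge> (\<Prod>j<k. P j - real j * \<epsilon>)"
  using mass mass_remaining
proof (induction k)
  case (Suc k)
  have inj: "inj_on (\<lambda>(us, v). us @ [v]) (Sigma (distinct_lists k S) (\<lambda>us. S - set us))"
    by (auto simp: inj_on_def)
  have snoc: "(\<Prod>j<Suc k. f j ((l @ [v]) ! j)) = (\<Prod>j<k. f j (l ! j)) * f k v"
    if "l \<in> distinct_lists k S" for l v
    using that by (auto simp: distinct_lists_def nth_append intro!: prod.cong)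
  have "(\<Sum>l\<in>distinct_lists (Suc k) S. \<Prod>j<Suc k. f j (l ! j))
      = (\<Sum>l\<in>distinct_lists k S. \<Sum>v\<in>S - set l. \<Prod>j<Suc k. f j ((l @ [v]) ! j))"
    unfolding distinct_lists_Suc_snoc sum.reindex[OF inj] using S
    by (subst sum.Sigma) (auto intro: finite_distinct_lists simp: case_prod_unfold comp_def)
  also have "\<dots> = (\<Sum>l\<in>distinct_lists k S. (\<Prod>j<k. f j (l ! j)) * (\<Sum>v\<in>S - set l. f k v))"
    by (intro sum.cong refl) (simp only: snoc sum_distrib_left)
  also have "\<dots> \<ge> (\<Sum>l\<in>distinct_lists k S. (\<Prod>j<k. f j (l ! j)) * (P k - real k * \<epsilon>))"
  proof (intro sum_mono mult_left_mono)
    fix l assume l: "l \<in> distinct_lists k S"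
    show "0 \<le> (\<Prod>j<k. f j (l ! j))" using f_nonneg by (intro prod_nonneg) auto
    have sl: "set l \<subseteq> S" and cl: "card (set l) \<le> k"
      using l by (auto simp: distinct_lists_def intro: order_trans[OF card_length])
    have "(\<Sum>v\<in>set l. f k v) \<le> real (card (set l)) * \<epsilon>"
      by (rule sum_bounded_above) (use f_le sl in auto)
    also have "\<dots> \<le> real k * \<epsilon>" using cl \<open>\<epsilon> \<ge> 0\<close> by (intro mult_right_mono) auto
    finally show "P k - real k * \<epsilon> \<le> (\<Sum>v\<in>S - set l. f k v)"
      using sum_diff[OF S sl, of "f k"] Suc.prems(1)[of k] by linarith
  qed
  also have "(\<Sum>l\<in>distinct_lists k S. (\<Prod>j<k. f j (l ! j)) * (P k - real k * \<epsilon>))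
      = (\<Sum>l\<in>distinct_lists k S. \<Prod>j<k. f j (l ! j)) * (P k - real k * \<epsilon>)"
    by (simp add: sum_distrib_right)
  also have "\<dots> \<ge> (\<Prod>j<k. P j - real j * \<epsilon>) * (P k - real k * \<epsilon>)"
    using Suc by (intro mult_right_mono) auto
  finally show ?case by simp
qed simp

text \<open>\<open>y\<^sup>\<alpha>\<close> is dominated by \<open>(\<sigma> / 2\<^sup>i)\<^sup>\<alpha>\<close> for the least \<open>i\<close> with \<open>y > \<sigma> / 2\<^sup>i\<^sup>+\<^sup>1\<close>, or by
  \<open>(\<sigma> / 2\<^sup>N)\<^sup>\<alpha>\<close> if there is none below \<open>N\<close>.\<close>
lemma powr_le_dyadic_sum:
  fixes y \<sigma> \<alpha> :: real
  assumes "0 \<le> y" "y \<le> \<sigma>" "\<alpha> > 0"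
  shows "y powr \<alpha> \<le> (\<Sum>i<N. \<sigma> powr \<alpha> * ((1/2) powr \<alpha>) ^ i * (if y > \<sigma> / 2 ^ Suc i then 1 else 0))
            + \<sigma> powr \<alpha> * ((1/2) powr \<alpha>) ^ N"
  using assms(1,2)
proof (induction N arbitrary: \<sigma>)
  case 0 then show ?case using assms by (simp add: powr_mono2)
next
  case (Suc N)
  let ?g = "\<lambda>\<sigma> i. \<sigma> powr \<alpha> * ((1/2) powr \<alpha>) ^ i * (if y > \<sigma> / 2 ^ Suc i then 1 else (0::real))"
  have \<sigma>: "0 \<le> \<sigma>" using Suc.prems by simp
  show ?case
  proof (cases "y > \<sigma> / 2")
    case True
    have "y powr \<alpha> \<le> \<sigma> powr \<alpha>" using Suc.prems assms by (simp add: powr_mono2)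
    also have "\<sigma> powr \<alpha> = ?g \<sigma> 0" using True by simp
    also have "?g \<sigma> 0 \<le> (\<Sum>i<Suc N. ?g \<sigma> i)" by (rule member_le_sum) (use \<sigma> in auto)
    finally show ?thesis by (smt (verit) powr_ge_zero zero_le_power mult_nonneg_nonneg)
  next
    case False
    have IH: "y powr \<alpha> \<le> (\<Sum>i<N. ?g (\<sigma>/2) i) + (\<sigma>/2) powr \<alpha> * ((1/2) powr \<alpha>) ^ N"
      using Suc.IH[of "\<sigma>/2"] False Suc.prems by simp
    have half: "(\<sigma>/2) powr \<alpha> = \<sigma> powr \<alpha> * (1/2) powr \<alpha>" using \<sigma> by (simp add: powr_divide)
    have "(\<Sum>i<N. ?g (\<sigma>/2) i) = (\<Sum>i<N. ?g \<sigma> (Suc i))"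
      by (intro sum.cong refl) (simp add: half field_simps)
    also have "\<dots> = (\<Sum>i<Suc N. ?g \<sigma> i)"
      by (subst sum.lessThan_Suc_shift) (use False in simp)
    finally show ?thesis using IH half by (simp add: mult.assoc)
  qed
qed

section \<open>Balls in the torus\<close>

abbreviation unif01 :: "real measure" where
  "unif01 \<equiv> uniform_measure lborel {0..1}"

lemma prob_space_unif01: "prob_space unif01"
  by (rule prob_space_uniform_measure) auto

lemma emeasure_unif01: "A \<in> sets borel \<Longrightarrow> emeasure unif01 A = emeasure lborel ({0..1} \<inter> A)"
  by (subst emeasure_uniform_measure) (auto simp: divide_ennreal_def)

lemma finite_product_prob_space_const:
  "prob_space M \<Longrightarrow> finite I \<Longrightarrow> finite_product_prob_space (\<lambda>_. M) I"
  by (intro finite_product_prob_space.intro finite_product_sigma_finite.intro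
      product_prob_space.intro product_sigma_finite.intro finite_product_sigma_finite_axioms.intro
      product_prob_space_axioms.intro) (auto simp: prob_space_imp_sigma_finite)

lemma prob_space_torus: "prob_space (torus d)"
  unfolding torus_def by (rule prob_space_PiM) (rule prob_space_unif01)

lemma space_torus: "space (torus d) = PiE {..<d} (\<lambda>_. UNIV)"
  unfolding torus_def by (simp add: space_PiM)

lemma emeasure_torus_PiE:
  assumes "\<And>i. i < d \<Longrightarrow> A i \<in> sets borel"
  shows "emeasure (torus d) (PiE {..<d} A) = (\<Prod>i<d. emeasure unif01 (A i))"
proof -
  interpret finite_product_prob_space "\<lambda>_. unif01" "{..<d}"
    by (rule finite_product_prob_space_const) (auto simp: prob_space_unif01)
  show ?thesis unfolding torus_def using assms by (intro measure_times) auto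
qed

lemma measurable_torus_component [measurable]: "(\<lambda>x. x i) \<in> borel_measurable (torus d)"
proof (cases "i < d")
  case True
  then show ?thesis unfolding torus_def
    using measurable_component_singleton[of i "{..<d}" "\<lambda>_. unif01"] by (simp add: measurable_def)
next
  case False
  have "(\<lambda>x. undefined) \<in> borel_measurable (torus d)" by simp
  then show ?thesis
    by (rule measurable_cong[THEN iffD1, rotated])
       (use False in \<open>auto simp: space_torus PiE_def extensional_def\<close>)
qed

lemma measurable_PiM_torus_coordinate [measurable]:
  "(\<lambda>xs. xs v i) \<in> borel_measurable (PiM I (\<lambda>_. torus d))"
proof (cases "v \<in> I")
  case True
  have "(\<lambda>xs. xs v) \<in> measurable (PiM I (\<lambda>_. torus d)) (torus d)"
    using True by (rule measurable_component_singleton)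
  then show ?thesis using measurable_compose[OF _ measurable_torus_component] by blast
next
  case False
  have "(\<lambda>xs. undefined i) \<in> borel_measurable (PiM I (\<lambda>_. torus d))" by simp
  then show ?thesis
    by (rule measurable_cong[THEN iffD1, rotated])
       (use False in \<open>auto simp: space_PiM PiE_def extensional_def\<close>)
qed

lemma distr_PiM_torus_component: "u \<in> I \<Longrightarrow> distr (PiM I (\<lambda>_. torus d)) (torus d) (\<lambda>xs. xs u) = torus d"
  by (rule distr_PiM_component) (auto simp: prob_space_torus)

context
  fixes d :: nat and u :: 'i and I :: "'i set" and f :: "(nat \<Rightarrow> real) \<Rightarrow> real"
  assumes u: "u \<in> I" and f [measurable]: "f \<in> borel_measurable (torus d)"
begin

lemma integral_PiM_torus_component:
  "(\<integral>xs. f (xs u) \<partial>PiM I (\<lambda>_. torus d)) = integral\<^sup>L (torus d) f"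
  using integral_distr[OF measurable_component_singleton[OF u] f] distr_PiM_torus_component[OF u] by simp

lemma integrable_PiM_torus_component:
  "integrable (torus d) f \<Longrightarrow> integrable (PiM I (\<lambda>_. torus d)) (\<lambda>xs. f (xs u))"
  using integrable_distr_eq[OF measurable_component_singleton[OF u] f] distr_PiM_torus_component[OF u] by simp

end

text \<open>Outside the first \<open>d\<close> coordinates points of \<open>torus d\<close> are \<open>undefined\<close>; points of the unit
  cube are the honest ones, and almost every point is one.\<close>
definition unit_cube :: "nat \<Rightarrow> (nat \<Rightarrow> real) set" where
  "unit_cube d = PiE {..<d} (\<lambda>_. {0..1})"

lemma unit_cube_sets [measurable]: "unit_cube d \<in> sets (torus d)"
  unfolding unit_cube_def torus_def by (rule sets_PiM_I_finite) auto

lemma measure_unit_cube: "measure (torus d) (unit_cube d) = 1"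
proof -
  interpret prob_space "torus d" by (rule prob_space_torus)
  have "emeasure (torus d) (unit_cube d) = 1"
    unfolding unit_cube_def by (subst emeasure_torus_PiE) (auto simp: emeasure_unif01)
  then show ?thesis by (simp add: emeasure_eq_measure)
qed

lemma AE_unit_cube: "AE x in torus d. x \<in> unit_cube d"
proof -
  interpret prob_space "torus d" by (rule prob_space_torus)
  show ?thesis using AE_in_set_eq_1[OF unit_cube_sets] measure_unit_cube by simp
qed

lemma insert_0_Collect_eq_image:
  fixes d :: nat
  shows "insert 0 {g i |i. i < d} = (\<lambda>i. if i < d then g i else (0::real)) ` {..d}"
proof (intro set_eqI iffI)
  fix x assume "x \<in> insert 0 {g i |i. i < d}"
  then show "x \<in> (\<lambda>i. if i < d then g i else 0) ` {..d}"
  proof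
    assume "x = 0" then show ?thesis by (intro rev_image_eqI[of d]) auto
  next
    assume "x \<in> {g i |i. i < d}"
    then obtain i where "i < d" "x = g i" by auto
    then show ?thesis by (intro rev_image_eqI[of i]) auto
  qed
qed auto

lemma torus_dist_measurable [measurable]:
  assumes "\<And>i. (\<lambda>x. f x i) \<in> borel_measurable M" "\<And>i. (\<lambda>x. g x i) \<in> borel_measurable M"
  shows "(\<lambda>x. torus_dist d p (f x) (g x)) \<in> borel_measurable M"
proof (cases p)
  case (enat q)
  show ?thesis unfolding torus_dist_def enat circ_dist_def using assms by simp
next
  case infinity
  show ?thesis unfolding torus_dist_def infinity insert_0_Collect_eq_image circ_dist_def
    using assms by measurable
qed

lemma circ_dist_nonneg: "a \<in> {0..1} \<Longrightarrow> b \<in> {0..1} \<Longrightarrow> circ_dist a b \<ge> 0"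
  by (auto simp: circ_dist_def)

lemma torus_dist_enat:
  assumes "0 < q" "\<And>i. i < d \<Longrightarrow> circ_dist (c i) (x i) \<ge> 0"
  shows "torus_dist d (enat q) c x = root q (\<Sum>i<d. circ_dist (c i) (x i) ^ q)"
proof -
  have "0 \<le> (\<Sum>i<d. circ_dist (c i) (x i) ^ q)" by (intro sum_nonneg) (simp add: assms)
  then show ?thesis unfolding torus_dist_def using assms by (simp add: root_powr_inverse)
qed

context
  fixes d :: nat and p :: enat and c x :: "nat \<Rightarrow> real"
  assumes p: "p \<ge> 1" and circ_nonneg: "\<And>i. i < d \<Longrightarrow> circ_dist (c i) (x i) \<ge> 0"
begin

lemma circ_dist_le_torus_dist: "i < d \<Longrightarrow> circ_dist (c i) (x i) \<le> torus_dist d p c x"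
proof (cases p)
  case (enat q)
  assume i: "i < d"
  then have q: "0 < q" using p enat by (simp add: one_enat_def)
  have "circ_dist (c i) (x i) ^ q \<le> (\<Sum>i<d. circ_dist (c i) (x i) ^ q)"
    by (rule member_le_sum) (use i circ_nonneg in auto)
  then have "root q (circ_dist (c i) (x i) ^ q) \<le> root q (\<Sum>i<d. circ_dist (c i) (x i) ^ q)"
    using q by (simp add: real_root_le_iff)
  then show ?thesis using q circ_nonneg i enat by (simp add: torus_dist_enat real_root_pos2)
next
  case infinity
  assume "i < d"
  then have "circ_dist (c i) (x i) \<le> Max (insert 0 {circ_dist (c i) (x i) |i. i < d})"
    by (intro Max_ge) auto
  then show ?thesis by (simp add: torus_dist_def infinity)
qed

lemma torus_dist_nonneg: "torus_dist d p c x \<ge> 0"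
proof (cases p)
  case (enat q)
  then have "0 < q" using p by (simp add: one_enat_def)
  moreover have "0 \<le> (\<Sum>i<d. circ_dist (c i) (x i) ^ q)" by (intro sum_nonneg) (simp add: circ_nonneg)
  ultimately show ?thesis using enat circ_nonneg by (simp add: torus_dist_enat)
next
  case infinity
  have "0 \<le> Max (insert 0 {circ_dist (c i) (x i) |i. i < d})" by (rule Max_ge) auto
  then show ?thesis by (simp add: torus_dist_def infinity)
qed

lemma torus_dist_less:
  assumes d: "d \<ge> 1" and lt: "\<And>i. i < d \<Longrightarrow> circ_dist (c i) (x i) < \<rho>"
  shows "torus_dist d p c x < real d * \<rho>"
proof -
  have \<rho>: "\<rho> > 0" using lt[of 0] circ_nonneg[of 0] d by linarith
  show ?thesis
  proof (cases p)
    case (enat q)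
    then have q: "0 < q" using p by (simp add: one_enat_def)
    have "(\<Sum>i<d. circ_dist (c i) (x i) ^ q) < (\<Sum>i<d. \<rho> ^ q)"
      by (rule sum_strict_mono)
         (use d circ_nonneg lt q in \<open>auto intro: power_strict_mono simp: lessThan_empty_iff\<close>)
    then have "root q (\<Sum>i<d. circ_dist (c i) (x i) ^ q) < root q (real d * \<rho> ^ q)"
      using q by simp
    also have "\<dots> = root q (real d) * \<rho>"
      using q \<rho> by (simp add: real_root_mult real_root_pos2)
    also have "\<dots> \<le> real d * \<rho>"
    proof -
      have "root q (real d) \<le> root q (real d ^ q)"
        using q d by (intro real_root_le_mono) (auto intro: self_le_power)
      then show ?thesis using q \<rho> by (intro mult_right_mono) (auto simp: real_root_pos2)
    qed
    finally show ?thesis using enat q circ_nonneg by (simp add: torus_dist_enat)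
  next
    case infinity
    have "Max (insert 0 {circ_dist (c i) (x i) |i. i < d}) < \<rho>"
      using \<rho> lt by (subst Max_less_iff) auto
    also have "\<rho> \<le> real d * \<rho>" using \<rho> d by simp
    finally show ?thesis by (simp add: torus_dist_def infinity)
  qed
qed

end

definition raw_weight :: "nat \<Rightarrow> enat \<Rightarrow> real \<Rightarrow> (nat \<Rightarrow> real) \<Rightarrow> (nat \<Rightarrow> real) \<Rightarrow> real" where
  "raw_weight d p wv c x = wv / torus_dist d p c x ^ d"

definition raw_weight_above :: "nat \<Rightarrow> enat \<Rightarrow> (nat \<Rightarrow> real) \<Rightarrow> real \<Rightarrow> real \<Rightarrow> (nat \<Rightarrow> real) set" where
  "raw_weight_above d p c wv y = {x \<in> unit_cube d. raw_weight d p wv c x > y}"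

lemma raw_weight_measurable [measurable]: "(\<lambda>x. raw_weight d p wv c x) \<in> borel_measurable (torus d)"
  unfolding raw_weight_def by measurable

lemma raw_weight_above_sets [measurable]: "raw_weight_above d p c wv y \<in> sets (torus d)"
proof -
  have "raw_weight_above d p c wv y = {x \<in> space (torus d). raw_weight d p wv c x > y} \<inter> unit_cube d"
    using sets.sets_into_space[OF unit_cube_sets] by (auto simp: raw_weight_above_def)
  also have "\<dots> \<in> sets (torus d)" by measurable
  finally show ?thesis .
qed

lemma raw_weight_above_antimono: "y1 \<le> y2 \<Longrightarrow> raw_weight_above d p c wv y2 \<subseteq> raw_weight_above d p c wv y1"
  unfolding raw_weight_above_def by auto

lemma circ_dist_nonneg_unit_cube:
  "\<forall>i<d. c i \<in> {0..1} \<Longrightarrow> x \<in> unit_cube d \<Longrightarrow> i < d \<Longrightarrow> circ_dist (c i) (x i) \<ge> 0"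
  by (rule circ_dist_nonneg) (auto simp: unit_cube_def)

text \<open>The set of points at circular distance less than \<open>r\<close> from \<open>c\<close> is covered by three
  intervals of length \<open>2 r\<close>, centred at \<open>c - 1\<close>, \<open>c\<close> and \<open>c + 1\<close>.\<close>
lemma emeasure_circ_dist_less:
  assumes c: "c \<in> {0..1}" and r: "r > 0"
  shows "emeasure unif01 {t. t \<in> {0..1} \<and> circ_dist c t < r} \<le> ennreal (6 * r)"
proof -
  let ?I = "\<lambda>a. {a - r<..<a + r}"
  have "{t. t \<in> {0..1} \<and> circ_dist c t < r} \<in> sets borel"
    unfolding circ_dist_def by measurable
  then have "emeasure unif01 {t. t \<in> {0..1} \<and> circ_dist c t < r}
      = emeasure lborel ({0..1} \<inter> {t. t \<in> {0..1} \<and> circ_dist c t < r})"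
    by (rule emeasure_unif01)
  also have "\<dots> \<le> emeasure lborel ((?I c \<union> ?I (c - 1)) \<union> ?I (c + 1))"
    using c by (intro emeasure_mono) (auto simp: circ_dist_def min_def abs_if split: if_splits)
  also have "\<dots> \<le> emeasure lborel (?I c \<union> ?I (c - 1)) + emeasure lborel (?I (c + 1))"
    by (rule emeasure_subadditive) auto
  also have "emeasure lborel (?I c \<union> ?I (c - 1)) \<le> emeasure lborel (?I c) + emeasure lborel (?I (c - 1))"
    by (rule emeasure_subadditive) auto
  also have "emeasure lborel (?I c) + emeasure lborel (?I (c - 1)) + emeasure lborel (?I (c + 1))
      = ennreal (2 * r) + ennreal (2 * r) + ennreal (2 * r)"
    using r by simp
  also have "\<dots> = ennreal (6 * r)" using r by (simp add: ennreal_plus[symmetric] del: ennreal_plus)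
  finally show ?thesis by (simp add: add_right_mono)
qed

lemma raw_weight_gt_iff:
  assumes d: "d \<ge> 1" and wv: "wv > 0" and y: "y > 0" and t: "torus_dist d p c x \<ge> 0"
  shows "raw_weight d p wv c x > y \<longleftrightarrow> 0 < torus_dist d p c x \<and> torus_dist d p c x < root d (wv / y)"
proof (cases "torus_dist d p c x = 0")
  case True then show ?thesis using d y by (simp add: raw_weight_def power_0_left)
next
  case False
  let ?t = "torus_dist d p c x"
  have t_pos: "?t > 0" using t False by simp
  have "raw_weight d p wv c x > y \<longleftrightarrow> ?t ^ d < wv / y"
    using t_pos y wv by (simp add: raw_weight_def field_simps)
  also have "\<dots> \<longleftrightarrow> root d (?t ^ d) < root d (wv / y)" using d by simp
  also have "root d (?t ^ d) = ?t" using d t_pos by (simp add: real_root_pos2)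
  finally show ?thesis using t_pos by simp
qed

definition inner_interval :: "real \<Rightarrow> real \<Rightarrow> real set" where
  "inner_interval a \<rho> = (if a \<le> 1/2 then {a<..<a + \<rho>} else {a - \<rho><..<a})"

lemma inner_interval_sets [measurable]: "inner_interval a \<rho> \<in> sets borel"
  unfolding inner_interval_def by simp

lemma inner_interval_subset: "a \<in> {0..1} \<Longrightarrow> \<rho> \<le> 1/2 \<Longrightarrow> inner_interval a \<rho> \<subseteq> {0..1}"
  unfolding inner_interval_def by auto

lemma circ_dist_inner_interval:
  assumes "a \<in> {0..1}" "0 < \<rho>" "\<rho> \<le> 1/2" "t \<in> inner_interval a \<rho>"
  shows "0 < circ_dist a t \<and> circ_dist a t < \<rho>"
proof -
  have "0 < \<bar>a - t\<bar>" "\<bar>a - t\<bar> < \<rho>" using assms unfolding inner_interval_def by (auto split: if_splits)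
  then show ?thesis using assms(3) by (simp add: circ_dist_def min_def)
qed

lemma emeasure_unif01_inner_interval:
  "a \<in> {0..1} \<Longrightarrow> 0 < \<rho> \<Longrightarrow> \<rho> \<le> 1/2 \<Longrightarrow> emeasure unif01 (inner_interval a \<rho>) = ennreal \<rho>"
  using inner_interval_subset[of a \<rho>]
  by (subst emeasure_unif01) (auto simp: inner_interval_def Int_absorb1 split: if_splits)

context
  fixes d :: nat and p :: enat and c :: "nat \<Rightarrow> real" and wv y :: real
  assumes d: "d \<ge> 1" and p: "p \<ge> 1" and c: "\<forall>i<d. c i \<in> {0..1}" and wv: "wv > 0" and y: "y > 0"
begin

lemma measure_raw_weight_above_le: "measure (torus d) (raw_weight_above d p c wv y) \<le> 6 ^ d * (wv / y)"
proof -
  interpret prob_space "torus d" by (rule prob_space_torus)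
  define r where "r = root d (wv / y)"
  have r: "r > 0" using wv y d unfolding r_def by simp
  let ?B = "\<lambda>i. {t. t \<in> {0..1} \<and> circ_dist (c i) t < r}"
  have B_sets: "\<And>i. ?B i \<in> sets borel" unfolding circ_dist_def by simp
  have box_sets: "PiE {..<d} ?B \<in> sets (torus d)"
    unfolding torus_def using B_sets by (intro sets_PiM_I_finite) auto
  have "raw_weight_above d p c wv y \<subseteq> PiE {..<d} ?B"
  proof
    fix x assume "x \<in> raw_weight_above d p c wv y"
    then have x: "x \<in> unit_cube d" and gt: "raw_weight d p wv c x > y"
      by (auto simp: raw_weight_above_def)
    note circ_nonneg = circ_dist_nonneg_unit_cube[OF c x]
    have "torus_dist d p c x < r"
      using raw_weight_gt_iff[OF d wv y torus_dist_nonneg[OF p circ_nonneg]] gt by (simp add: r_def)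
    then have "\<And>i. i < d \<Longrightarrow> circ_dist (c i) (x i) < r"
      using circ_dist_le_torus_dist[OF p circ_nonneg] by (meson le_less_trans)
    then show "x \<in> PiE {..<d} ?B" using x by (auto simp: unit_cube_def PiE_iff)
  qed
  then have "emeasure (torus d) (raw_weight_above d p c wv y) \<le> emeasure (torus d) (PiE {..<d} ?B)"
    using box_sets by (rule emeasure_mono)
  also have "\<dots> = (\<Prod>i<d. emeasure unif01 (?B i))" using B_sets by (rule emeasure_torus_PiE)
  also have "\<dots> \<le> (\<Prod>i<d. ennreal (6 * r))"
    by (rule prod_mono_ennreal) (use emeasure_circ_dist_less c r in auto)
  also have "\<dots> = ennreal ((6 * r) ^ d)" using r by (simp add: ennreal_power)
  finally have "measure (torus d) (raw_weight_above d p c wv y) \<le> (6 * r) ^ d"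
    using r by (simp add: emeasure_eq_measure ennreal_le_iff)
  also have "(6 * r) ^ d = 6 ^ d * (wv / y)"
    using d wv y unfolding r_def by (simp add: power_mult_distrib real_root_pow_pos2)
  finally show ?thesis .
qed

text \<open>For the lower bound a box of side \<open>\<rho> = (w / y)\<^sup>1\<^sup>/\<^sup>d / d\<close> next to \<open>c\<close> suffices.\<close>
lemma box_subset_raw_weight_above:
  assumes \<rho>: "0 < \<rho>" "\<rho> \<le> 1/2" and side: "real d * \<rho> \<le> root d (wv / y)"
  shows "PiE {..<d} (\<lambda>i. inner_interval (c i) \<rho>) \<subseteq> raw_weight_above d p c wv y"
proof
  fix x assume box: "x \<in> PiE {..<d} (\<lambda>i. inner_interval (c i) \<rho>)"
  then have x_in: "x i \<in> inner_interval (c i) \<rho>" if "i < d" for i using that by (auto simp: PiE_iff)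
  have close: "0 < circ_dist (c i) (x i) \<and> circ_dist (c i) (x i) < \<rho>" if "i < d" for i
    using circ_dist_inner_interval[OF _ \<rho> x_in[OF that]] c that by auto
  have "x i \<in> {0..1}" if "i < d" for i
    using inner_interval_subset[OF _ \<rho>(2), of "c i"] c x_in[OF that] that by auto
  then have x: "x \<in> unit_cube d" using box by (auto simp: unit_cube_def PiE_iff)
  note circ_nonneg = circ_dist_nonneg_unit_cube[OF c x]
  have "0 < circ_dist (c 0) (x 0)" using close d by simp
  then have "torus_dist d p c x > 0"
    using circ_dist_le_torus_dist[where p=p and d=d and c=c and x=x, OF p circ_nonneg, of 0] d by linarith
  moreover have "torus_dist d p c x < root d (wv / y)"
    using torus_dist_less[where p=p and d=d and c=c and x=x, OF p circ_nonneg d] close side by force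
  ultimately show "x \<in> raw_weight_above d p c wv y"
    unfolding raw_weight_above_def using x raw_weight_gt_iff[OF d wv y torus_dist_nonneg[OF p circ_nonneg]]
    by simp
qed

lemma measure_raw_weight_above_ge:
  assumes small: "wv / y \<le> (1/2) ^ d"
  shows "measure (torus d) (raw_weight_above d p c wv y) \<ge> (wv / y) / real d ^ d"
proof -
  interpret prob_space "torus d" by (rule prob_space_torus)
  define \<rho> where "\<rho> = root d (wv / y) / real d"
  have "root d (wv / y) \<le> root d ((1/2) ^ d)" using small d by simp
  then have "root d (wv / y) \<le> 1/2" using d by (simp add: real_root_pos2)
  then have \<rho>: "0 < \<rho>" "\<rho> \<le> 1/2" using wv y d unfolding \<rho>_def by (auto simp: field_simps)
  have "emeasure (torus d) (PiE {..<d} (\<lambda>i. inner_interval (c i) \<rho>))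
      = (\<Prod>i<d. emeasure unif01 (inner_interval (c i) \<rho>))"
    by (rule emeasure_torus_PiE) simp
  also have "\<dots> = (\<Prod>i<d. ennreal \<rho>)"
    using c \<rho> by (intro prod.cong refl emeasure_unif01_inner_interval) auto
  finally have "emeasure (torus d) (PiE {..<d} (\<lambda>i. inner_interval (c i) \<rho>)) = ennreal (\<rho> ^ d)"
    using \<rho> by (simp add: ennreal_power)
  moreover have "emeasure (torus d) (PiE {..<d} (\<lambda>i. inner_interval (c i) \<rho>))
      \<le> emeasure (torus d) (raw_weight_above d p c wv y)"
    using d by (intro emeasure_mono box_subset_raw_weight_above \<rho>) (auto simp: \<rho>_def)
  ultimately have "\<rho> ^ d \<le> measure (torus d) (raw_weight_above d p c wv y)"
    using \<rho> by (simp add: emeasure_eq_measure)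
  moreover have "\<rho> ^ d = (wv / y) / real d ^ d"
    using d wv y unfolding \<rho>_def by (simp add: power_divide real_root_pow_pos2)
  ultimately show ?thesis by simp
qed

end

lemma conn_weight_measurable [measurable]:
  assumes [measurable]: "\<And>i. (\<lambda>x. c x i) \<in> borel_measurable M" "\<And>i. (\<lambda>x. y x i) \<in> borel_measurable M"
  shows "(\<lambda>x. conn_weight d p T wv (c x) (y x)) \<in> borel_measurable M"
  unfolding conn_weight_def by measurable

lemma seq_prob_measurable [measurable]:
  assumes [measurable]: "\<And>v. (\<lambda>x. X v x) \<in> borel_measurable M"
  shows "(\<lambda>x. seq_prob (\<lambda>v. X v x) S us) \<in> borel_measurable M"
proof (induction us arbitrary: S)
  case (Cons u us)
  have [measurable]: "(\<lambda>x. seq_prob (\<lambda>v. X v x) (S - {u}) us) \<in> borel_measurable M"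
    by (rule Cons.IH)
  show ?case by (cases "u \<in> S") simp_all
qed simp

lemma nice_seq_measurable [measurable]:
  assumes "\<And>v. (\<lambda>x. X v x) \<in> borel_measurable M" "finite S"
  shows "Measurable.pred M (\<lambda>x. nice_seq (\<lambda>v. X v x) S us)"
proof -
  have "nice_seq (\<lambda>v. X v x) S us
      \<longleftrightarrow> (\<forall>j\<in>{..<length us}. \<forall>v\<in>S - set (take (Suc j) us). X v x < X (us ! j) x)" for x
    unfolding nice_seq_def by auto
  then show ?thesis
    by (simp only:) (rule pred_intros_finite(3), simp, rule pred_intros_finite(3), use assms in auto)
qed

lemma nice_prob_given_measurable:
  assumes [measurable]: "\<And>i. (\<lambda>x. c x i) \<in> borel_measurable M"
    "\<And>v i. (\<lambda>x. xs x v i) \<in> borel_measurable M"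
  shows "(\<lambda>x. nice_prob_given d p T k n w (xs x) (c x)) \<in> borel_measurable M"
proof -
  have [measurable]: "(\<lambda>x. conn_weight d p T (w v) (c x) (xs x v)) \<in> borel_measurable M" for v
    by measurable
  have [measurable]: "Measurable.pred M (\<lambda>x. nice_seq (\<lambda>v. conn_weight d p T (w v) (c x) (xs x v)) {..<n} us)"
    for us by (rule nice_seq_measurable) auto
  show ?thesis unfolding nice_prob_given_conv_sum by measurable
qed

text \<open>\<open>6\<^sup>d\<close> and \<open>1 / d\<^sup>d\<close> bound the measure of a ball of raw weight \<open>w / y\<close> from above and
  below, and consecutive scales differ by the factor \<open>scale_ratio d\<close>. The two parts of
  \<open>max_weight_ratio\<close> make the balls at the coarsest scale small enough for the lower bound
  and every single shell probability small compared to \<open>shell_mass\<close>.\<close>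
definition scale_ratio :: "nat \<Rightarrow> real" where
  "scale_ratio d = 2 * 6 ^ d * real d ^ d"

definition shell_mass :: "nat \<Rightarrow> nat \<Rightarrow> real" where
  "shell_mass d k = (1/2) * (1 / (4 * scale_ratio d ^ k)) ^ k"

definition dyadic_ratio :: "real \<Rightarrow> real" where
  "dyadic_ratio T = (1/2) powr (1/T)"

definition tail_const :: "real \<Rightarrow> real" where
  "tail_const T = 1 / (1 - 2 * dyadic_ratio T) + 1"

definition tail_cutoff :: "nat \<Rightarrow> nat \<Rightarrow> real \<Rightarrow> real" where
  "tail_cutoff d k T = 2 * tail_const T / shell_mass d k"

definition draw_bound :: "nat \<Rightarrow> nat \<Rightarrow> real \<Rightarrow> real" where
  "draw_bound d k T = 1 / (1 + real k + tail_cutoff d k T)"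

definition nice_const :: "nat \<Rightarrow> nat \<Rightarrow> real \<Rightarrow> real" where
  "nice_const d k T = draw_bound d k T ^ k * shell_mass d k / 2"

definition max_weight_ratio :: "nat \<Rightarrow> nat \<Rightarrow> real" where
  "max_weight_ratio d k = min (2 * 6 ^ d * (1/2) ^ d) (1 / (2 * (real k + 1) * scale_ratio d ^ k))"

lemma scale_ratio_ge_2: "d \<ge> 1 \<Longrightarrow> scale_ratio d \<ge> 2"
  using mult_mono[OF one_le_power[of "6::real" d] one_le_power[of "real d" d]]
  unfolding scale_ratio_def by simp

lemma shell_mass_pos: "d \<ge> 1 \<Longrightarrow> shell_mass d k > 0"
  using scale_ratio_ge_2[of d] unfolding shell_mass_def by simp

lemma dyadic_ratio_pos: "dyadic_ratio T > 0"
  unfolding dyadic_ratio_def by simp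

lemma dyadic_ratio_less_half: "0 < T \<Longrightarrow> T < 1 \<Longrightarrow> 2 * dyadic_ratio T < 1"
  using powr_less_mono'[of "1/2" 1 "1/T"] unfolding dyadic_ratio_def by simp

lemma tail_const_pos: "0 < T \<Longrightarrow> T < 1 \<Longrightarrow> tail_const T > 0"
  using dyadic_ratio_less_half[of T] unfolding tail_const_def by (simp add: add_pos_nonneg)

lemma tail_cutoff_pos: "d \<ge> 1 \<Longrightarrow> 0 < T \<Longrightarrow> T < 1 \<Longrightarrow> tail_cutoff d k T > 0"
  using tail_const_pos[of T] shell_mass_pos[of d k] unfolding tail_cutoff_def by simp

lemma draw_bound_pos: "d \<ge> 1 \<Longrightarrow> 0 < T \<Longrightarrow> T < 1 \<Longrightarrow> draw_bound d k T > 0"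
  using tail_cutoff_pos[of d T k] unfolding draw_bound_def by (simp add: add_pos_pos)

lemma nice_const_pos: "d \<ge> 1 \<Longrightarrow> 0 < T \<Longrightarrow> T < 1 \<Longrightarrow> nice_const d k T > 0"
  using draw_bound_pos[of d T k] shell_mass_pos[of d k] unfolding nice_const_def by simp

lemma max_weight_ratio_pos: "d \<ge> 1 \<Longrightarrow> max_weight_ratio d k > 0"
  using scale_ratio_ge_2[of d] unfolding max_weight_ratio_def by simp

section \<open>Shells around a fixed clause position\<close>

locale clause_setting =
  fixes d :: nat and p :: enat and T :: real and k n :: nat and w :: "nat \<Rightarrow> real"
    and c :: "nat \<Rightarrow> real"
  assumes d: "d \<ge> 1" and p: "p \<ge> 1" and T: "0 < T" "T < 1"
    and c: "\<forall>i<d. c i \<in> {0..1}" and w: "\<And>v. v < n \<Longrightarrow> w v \<ge> 1" and n: "n \<ge> 1"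
    and small: "Max (w ` {..<n}) / (\<Sum>v<n. w v) \<le> max_weight_ratio d k"
begin

definition W :: real where "W = (\<Sum>v<n. w v)"

definition max_weight :: real where "max_weight = Max (w ` {..<n})"

definition scale :: "nat \<Rightarrow> real" where
  "scale j = W * (2 * 6 ^ d) * scale_ratio d ^ (k - j)"

definition near :: "nat \<Rightarrow> real \<Rightarrow> (nat \<Rightarrow> real) set" where
  "near v y = raw_weight_above d p c (w v) y"

lemma W_ge_1: "W \<ge> 1"
proof -
  have "w 0 \<le> W" unfolding W_def
    by (rule member_le_sum) (use w n in \<open>auto intro: order_trans[OF zero_le_one]\<close>)
  then show ?thesis using w[of 0] n by simp
qed

lemma w_pos: "v < n \<Longrightarrow> w v > 0"
  using w[of v] by simp

lemma w_le_max_weight: "v < n \<Longrightarrow> w v \<le> max_weight"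
  unfolding max_weight_def by (rule Max_ge) auto

lemma scale_pos: "scale j > 0"
  unfolding scale_def using W_ge_1 scale_ratio_ge_2[OF d] by simp

lemma scale_antimono: "j \<le> j' \<Longrightarrow> scale j' \<le> scale j"
  unfolding scale_def using W_ge_1 scale_ratio_ge_2[OF d]
  by (intro mult_left_mono power_increasing) auto

lemma scale_k: "scale k = W * (2 * 6 ^ d)"
  unfolding scale_def by simp

lemma scale_Suc: "j < k \<Longrightarrow> scale j = scale (Suc j) * scale_ratio d"
  unfolding scale_def by (simp add: Suc_diff_Suc power_Suc[symmetric] mult_ac)

lemma w_div_le_scale_k:
  assumes "v < n" "y \<ge> scale k"
  shows "w v / y \<le> max_weight / (W * (2 * 6 ^ d))"
  using w_le_max_weight[OF assms(1)] w_pos[OF assms(1)] assms(2) scale_k W_ge_1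
  by (intro frac_le) auto

lemma w_div_le_half_power: "v < n \<Longrightarrow> y \<ge> scale k \<Longrightarrow> w v / y \<le> (1/2) ^ d"
proof -
  assume v: "v < n" and y: "y \<ge> scale k"
  have "w v / y \<le> (max_weight / W) / (2 * 6 ^ d)" using w_div_le_scale_k[OF v y] by simp
  also have "\<dots> \<le> max_weight_ratio d k / (2 * 6 ^ d)"
    using small unfolding max_weight_def W_def by (intro divide_right_mono) auto
  also have "\<dots> \<le> (2 * 6 ^ d * (1/2) ^ d) / (2 * 6 ^ d)"
    unfolding max_weight_ratio_def by (intro divide_right_mono) auto
  finally show ?thesis by simp
qed

lemma near_sets [measurable]: "near v y \<in> sets (torus d)"
  unfolding near_def by simp

lemma near_subset_unit_cube: "near v y \<subseteq> unit_cube d"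
  unfolding near_def raw_weight_above_def by auto

lemma near_antimono: "y1 \<le> y2 \<Longrightarrow> near v y2 \<subseteq> near v y1"
  unfolding near_def by (rule raw_weight_above_antimono)

lemma measure_near_le: "v < n \<Longrightarrow> y > 0 \<Longrightarrow> measure (torus d) (near v y) \<le> 6 ^ d * (w v / y)"
  unfolding near_def using measure_raw_weight_above_le[OF d p c w_pos] by simp

lemma measure_near_ge: "v < n \<Longrightarrow> y \<ge> scale k \<Longrightarrow> measure (torus d) (near v y) \<ge> (w v / y) / real d ^ d"
  unfolding near_def using scale_pos[of k]
  by (intro measure_raw_weight_above_ge[OF d p c w_pos] w_div_le_half_power) auto

text \<open>The \<open>j\<close>-th shell of \<open>v\<close> is where \<open>v\<close> has the \<open>j\<close>-th largest connection weight on the events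
  below; the innermost shell \<open>j = 0\<close> is a full ball.\<close>
definition shell :: "nat \<Rightarrow> nat \<Rightarrow> (nat \<Rightarrow> real) set" where
  "shell v j = near v (scale (Suc j)) - (if j = 0 then {} else near v (scale j))"

definition far :: "nat \<Rightarrow> (nat \<Rightarrow> real) set" where
  "far v = unit_cube d - near v (scale k)"

definition shell_prob :: "nat \<Rightarrow> nat \<Rightarrow> real" where
  "shell_prob v j = measure (torus d) (shell v j)"

definition near_prob :: "nat \<Rightarrow> real" where
  "near_prob v = measure (torus d) (near v (scale k))"

definition \<epsilon> :: real where "\<epsilon> = max_weight / (2 * W)"

lemma shell_sets [measurable]: "shell v j \<in> sets (torus d)"
  unfolding shell_def by auto

lemma far_sets [measurable]: "far v \<in> sets (torus d)"
  unfolding far_def by auto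

lemma shell_prob_ge:
  assumes v: "v < n" and j: "j < k"
  shows "shell_prob v j \<ge> (w v / scale (Suc j)) / real d ^ d - 6 ^ d * (w v / scale j)"
proof -
  interpret prob_space "torus d" by (rule prob_space_torus)
  have outer: "measure (torus d) (near v (scale (Suc j))) \<ge> (w v / scale (Suc j)) / real d ^ d"
    using measure_near_ge[OF v scale_antimono[of "Suc j" k]] j by simp
  have inner: "measure (torus d) (near v (scale j)) \<le> 6 ^ d * (w v / scale j)"
    using measure_near_le[OF v scale_pos] .
  show ?thesis
  proof (cases "j = 0")
    case True
    have "0 \<le> 6 ^ d * (w v / scale j)" using w_pos[OF v] scale_pos[of j] by simp
    then show ?thesis using outer True by (simp add: shell_prob_def shell_def)
  next
    case False
    have "near v (scale j) \<subseteq> near v (scale (Suc j))" by (rule near_antimono[OF scale_antimono]) simp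
    then have "shell_prob v j = measure (torus d) (near v (scale (Suc j))) - measure (torus d) (near v (scale j))"
      unfolding shell_prob_def shell_def using False by (simp add: finite_measure_Diff)
    then show ?thesis using outer inner by simp
  qed
qed

lemma shell_prob_nonneg: "shell_prob v j \<ge> 0"
  unfolding shell_prob_def by simp

lemma shell_prob_le_\<epsilon>:
  assumes v: "v < n" and j: "j < k"
  shows "shell_prob v j \<le> \<epsilon>"
proof -
  interpret prob_space "torus d" by (rule prob_space_torus)
  have "shell_prob v j \<le> measure (torus d) (near v (scale (Suc j)))"
    unfolding shell_prob_def shell_def by (rule finite_measure_mono) auto
  also have "\<dots> \<le> 6 ^ d * (w v / scale (Suc j))" using measure_near_le[OF v scale_pos] .
  also have "\<dots> \<le> 6 ^ d * (max_weight / (W * (2 * 6 ^ d)))"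
    using w_div_le_scale_k[OF v scale_antimono[of "Suc j" k]] j by (intro mult_left_mono) auto
  also have "\<dots> = \<epsilon>" unfolding \<epsilon>_def by simp
  finally show ?thesis .
qed

lemma \<epsilon>_nonneg: "\<epsilon> \<ge> 0"
  unfolding \<epsilon>_def using W_ge_1 w_le_max_weight[of 0] w_pos[of 0] n by simp

lemma sum_shell_prob_ge:
  assumes j: "j < k"
  shows "(\<Sum>v<n. shell_prob v j) \<ge> 1 / (2 * scale_ratio d ^ (k - j))"
proof -
  let ?K = "scale_ratio d"
  have "(\<Sum>v<n. shell_prob v j) \<ge> (\<Sum>v<n. (w v / scale (Suc j)) / real d ^ d - 6 ^ d * (w v / scale j))"
    by (rule sum_mono) (use shell_prob_ge j in auto)
  also have "(\<Sum>v<n. (w v / scale (Suc j)) / real d ^ d - 6 ^ d * (w v / scale j))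
      = W * (1 / (scale (Suc j) * real d ^ d) - 6 ^ d / scale j)"
    unfolding W_def
    by (simp add: sum_subtractf sum_distrib_left sum_distrib_right sum_divide_distrib[symmetric] algebra_simps)
  also have "\<dots> = 1 / (2 * ?K ^ (k - j))"
  proof -
    have Kpow: "?K ^ (k - j) = ?K ^ (k - Suc j) * ?K"
      using j by (simp add: Suc_diff_Suc power_Suc[symmetric] mult_ac)
    have "scale j = W * (2 * 6 ^ d) * ?K ^ (k - Suc j) * ?K"
      using scale_Suc[OF j] by (simp add: scale_def)
    then show ?thesis unfolding Kpow scale_def
      using W_ge_1 d by (simp add: scale_ratio_def field_simps)
  qed
  finally show ?thesis .
qed

lemma near_prob_nonneg: "near_prob v \<ge> 0"
  unfolding near_prob_def by simp

lemma near_prob_le_1: "near_prob v \<le> 1"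
  unfolding near_prob_def using prob_space.prob_le_1[OF prob_space_torus] by blast

lemma sum_near_prob_le_half: "(\<Sum>v<n. near_prob v) \<le> 1/2"
proof -
  have "(\<Sum>v<n. near_prob v) \<le> (\<Sum>v<n. 6 ^ d * (w v / scale k))"
    by (rule sum_mono) (use measure_near_le scale_pos in \<open>auto simp: near_prob_def\<close>)
  also have "\<dots> = 6 ^ d * W / scale k"
    unfolding W_def by (simp add: sum_distrib_left sum_divide_distrib[symmetric])
  also have "\<dots> = 1/2" unfolding scale_k using W_ge_1 by simp
  finally show ?thesis .
qed

lemma measure_far: "measure (torus d) (far v) = 1 - near_prob v"
proof -
  interpret prob_space "torus d" by (rule prob_space_torus)
  show ?thesis unfolding far_def near_prob_def
    using near_subset_unit_cube measure_unit_cube by (simp add: finite_measure_Diff)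
qed

definition positions :: "(nat \<Rightarrow> nat \<Rightarrow> real) measure" where
  "positions = PiM {..<n} (\<lambda>_. torus d)"

lemma prob_space_positions: "prob_space positions"
  unfolding positions_def by (rule prob_space_PiM) (rule prob_space_torus)

lemma measure_positions_PiE:
  assumes "\<And>u. u < n \<Longrightarrow> A u \<in> sets (torus d)"
  shows "measure positions (PiE {..<n} A) = (\<Prod>u<n. measure (torus d) (A u))"
proof -
  interpret finite_product_prob_space "\<lambda>_. torus d" "{..<n}"
    by (rule finite_product_prob_space_const) (auto simp: prob_space_torus)
  show ?thesis unfolding positions_def using assms by (intro finite_measure_PiM_emb) auto
qed

definition first_index :: "nat list \<Rightarrow> nat \<Rightarrow> nat" where
  "first_index l u = (LEAST j. l ! j = u)"

definition slot :: "nat list \<Rightarrow> nat \<Rightarrow> (nat \<Rightarrow> real) set" where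
  "slot l u = (if u \<in> set l then shell u (first_index l u) else far u)"

definition shell_event :: "nat list \<Rightarrow> (nat \<Rightarrow> nat \<Rightarrow> real) set" where
  "shell_event l = PiE {..<n} (slot l)"

lemma first_index_nth: "distinct l \<Longrightarrow> j < length l \<Longrightarrow> first_index l (l ! j) = j"
  unfolding first_index_def
proof (rule Least_equality)
  fix y assume "distinct l" "j < length l" "l ! y = l ! j"
  then show "j \<le> y" using nth_eq_iff_index_eq[of l y j] by (cases "y < length l") auto
qed simp

lemma slot_sets: "slot l u \<in> sets (torus d)"
  unfolding slot_def by simp

lemma shell_event_sets [measurable]: "shell_event l \<in> sets positions"
  unfolding shell_event_def positions_def by (rule sets_PiM_I_finite) (auto simp: slot_sets)

lemma measure_shell_event:
  assumes l: "l \<in> distinct_lists k {..<n}"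
  shows "measure positions (shell_event l) = (\<Prod>j<k. shell_prob (l ! j) j) * (\<Prod>u\<in>{..<n} - set l. 1 - near_prob u)"
proof -
  have dl: "distinct l" and ll: "length l = k" and sl: "set l \<subseteq> {..<n}"
    using l by (auto simp: distinct_lists_def)
  have "measure positions (shell_event l) = (\<Prod>u<n. measure (torus d) (slot l u))"
    unfolding shell_event_def by (rule measure_positions_PiE) (rule slot_sets)
  also have "\<dots> = (\<Prod>u\<in>set l. measure (torus d) (slot l u)) * (\<Prod>u\<in>{..<n} - set l. measure (torus d) (slot l u))"
    using sl by (subst prod.union_disjoint[symmetric]) (auto intro!: prod.cong)
  also have "(\<Prod>u\<in>set l. measure (torus d) (slot l u)) = (\<Prod>j<k. shell_prob (l ! j) j)"
  proof -
    have inj: "inj_on ((!) l) {..<k}" using dl ll by (auto simp: inj_on_def nth_eq_iff_index_eq)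
    have img: "set l = (!) l ` {..<k}" using ll by (auto simp: in_set_conv_nth)
    show ?thesis unfolding img prod.reindex[OF inj]
      by (intro prod.cong refl) (use dl ll in \<open>auto simp: slot_def first_index_nth shell_prob_def\<close>)
  qed
  also have "(\<Prod>u\<in>{..<n} - set l. measure (torus d) (slot l u)) = (\<Prod>u\<in>{..<n} - set l. 1 - near_prob u)"
    by (intro prod.cong refl) (auto simp: slot_def measure_far)
  finally show ?thesis .
qed

lemma k_mul_\<epsilon>_le: "real k * \<epsilon> \<le> 1 / (4 * scale_ratio d ^ k)"
proof -
  have K: "scale_ratio d ^ k > 0" using scale_ratio_ge_2[OF d] by simp
  have "\<epsilon> = (max_weight / W) / 2" unfolding \<epsilon>_def by simp
  also have "\<dots> \<le> max_weight_ratio d k / 2" using small unfolding max_weight_def W_def by simp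
  also have "\<dots> \<le> (1 / (2 * (real k + 1) * scale_ratio d ^ k)) / 2"
    unfolding max_weight_ratio_def by (intro divide_right_mono) auto
  also have "\<dots> = 1 / (4 * (real k + 1) * scale_ratio d ^ k)" by simp
  finally have "real k * \<epsilon> \<le> real k * (1 / (4 * (real k + 1) * scale_ratio d ^ k))"
    by (intro mult_left_mono) auto
  also have "\<dots> = (real k / (real k + 1)) * (1 / (4 * scale_ratio d ^ k))" by (simp add: field_simps)
  also have "\<dots> \<le> 1 * (1 / (4 * scale_ratio d ^ k))" using K by (intro mult_right_mono) auto
  finally show ?thesis by simp
qed

lemma prod_one_minus_near_prob_ge: "(\<Prod>u\<in>{..<n} - set l. 1 - near_prob u) \<ge> 1/2"
proof -
  have "1 - (\<Sum>u\<in>{..<n} - set l. near_prob u) \<le> (\<Prod>u\<in>{..<n} - set l. 1 - near_prob u)"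
    by (rule Weierstrass_prod_ineq) (auto simp: near_prob_nonneg near_prob_le_1)
  moreover have "(\<Sum>u\<in>{..<n} - set l. near_prob u) \<le> (\<Sum>u<n. near_prob u)"
    by (rule sum_mono2) (auto simp: near_prob_nonneg)
  ultimately show ?thesis using sum_near_prob_le_half by linarith
qed

lemma shell_mass_step_le:
  assumes "j < k"
  shows "1 / (4 * scale_ratio d ^ k) \<le> 1 / (2 * scale_ratio d ^ (k - j)) - real j * \<epsilon>"
proof -
  let ?K = "scale_ratio d"
  have "?K ^ (k - j) \<le> ?K ^ k" using scale_ratio_ge_2[OF d] by (intro power_increasing) auto
  then have "1 / (2 * ?K ^ k) \<le> 1 / (2 * ?K ^ (k - j))"
    using scale_ratio_ge_2[OF d] by (intro divide_left_mono) auto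
  moreover have "real j * \<epsilon> \<le> real k * \<epsilon>" using assms \<epsilon>_nonneg by (intro mult_right_mono) auto
  ultimately show ?thesis using k_mul_\<epsilon>_le by (simp add: field_simps)
qed

lemma sum_prod_shell_prob_ge:
  "(\<Sum>l\<in>distinct_lists k {..<n}. \<Prod>j<k. shell_prob (l ! j) j) \<ge> (1 / (4 * scale_ratio d ^ k)) ^ k"
proof -
  let ?K = "scale_ratio d"
  define f where "f j v = (if j < k then shell_prob v j else 0)" for j v
  have K: "?K ^ k > 0" using scale_ratio_ge_2[OF d] by simp
  have "(\<Prod>j<k. 1 / (4 * ?K ^ k)) \<le> (\<Prod>j<k. 1 / (2 * ?K ^ (k - j)) - real j * \<epsilon>)"
    by (rule prod_mono) (use shell_mass_step_le K in auto)
  also have "\<dots> \<le> (\<Sum>l\<in>distinct_lists k {..<n}. \<Prod>j<k. f j (l ! j))"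
  proof (rule sum_prod_distinct_lists_ge)
    show "\<And>j v. f j v \<ge> 0" by (simp add: f_def shell_prob_nonneg)
    show "\<And>j v. v \<in> {..<n} \<Longrightarrow> f j v \<le> \<epsilon>" using shell_prob_le_\<epsilon> \<epsilon>_nonneg by (simp add: f_def)
    show "\<And>j. j < k \<Longrightarrow> 1 / (2 * ?K ^ (k - j)) \<le> (\<Sum>v<n. f j v)"
      using sum_shell_prob_ge by (simp add: f_def)
    show "\<And>j. j < k \<Longrightarrow> 1 / (2 * ?K ^ (k - j)) - real j * \<epsilon> \<ge> 0"
      using shell_mass_step_le K by (smt (verit) divide_pos_pos)
  qed (auto simp: \<epsilon>_nonneg)
  also have "\<dots> = (\<Sum>l\<in>distinct_lists k {..<n}. \<Prod>j<k. shell_prob (l ! j) j)"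
    by (simp add: f_def)
  finally show ?thesis by simp
qed

lemma sum_measure_shell_event_ge:
  "(\<Sum>l\<in>distinct_lists k {..<n}. measure positions (shell_event l)) \<ge> shell_mass d k"
proof -
  have "(\<Sum>l\<in>distinct_lists k {..<n}. (\<Prod>j<k. shell_prob (l ! j) j) * (1/2))
      \<le> (\<Sum>l\<in>distinct_lists k {..<n}. measure positions (shell_event l))"
  proof (rule sum_mono)
    fix l assume l: "l \<in> distinct_lists k {..<n}"
    have "(\<Prod>j<k. shell_prob (l ! j) j) \<ge> 0" by (intro prod_nonneg) (simp add: shell_prob_nonneg)
    then show "(\<Prod>j<k. shell_prob (l ! j) j) * (1/2) \<le> measure positions (shell_event l)"
      unfolding measure_shell_event[OF l] using prod_one_minus_near_prob_ge[of l]
      by (intro mult_left_mono) auto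
  qed
  then show ?thesis
    using sum_prod_shell_prob_ge unfolding shell_mass_def sum_distrib_right[symmetric] by linarith
qed

definition X :: "(nat \<Rightarrow> nat \<Rightarrow> real) \<Rightarrow> nat \<Rightarrow> real" where
  "X xs v = conn_weight d p T (w v) c (xs v)"

definition threshold :: "nat \<Rightarrow> real" where
  "threshold j = scale j powr (1 / T)"

definition dyadic_near :: "nat \<Rightarrow> nat \<Rightarrow> (nat \<Rightarrow> real) set" where
  "dyadic_near u i = near u (scale k / 2 ^ Suc i)"

text \<open>A dyadic upper bound for the connection weight of a far variable at position \<open>x\<close>
  (see \<open>powr_le_dyadic_sum\<close>); summed over all variables it bounds the weight left over
  after the \<open>k\<close> draws.\<close>
definition tail_term :: "nat \<Rightarrow> (nat \<Rightarrow> real) \<Rightarrow> real" where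
  "tail_term u x = (\<Sum>i<n. threshold k * dyadic_ratio T ^ i * indicator (dyadic_near u i) x)
      + threshold k * dyadic_ratio T ^ n"

definition tail_weight :: "(nat \<Rightarrow> nat \<Rightarrow> real) \<Rightarrow> real" where
  "tail_weight xs = (\<Sum>u<n. tail_term u (xs u))"

lemma raw_weight_nonneg:
  assumes "v < n" "x \<in> unit_cube d"
  shows "raw_weight d p (w v) c x \<ge> 0"
proof -
  have "torus_dist d p c x \<ge> 0"
    by (rule torus_dist_nonneg[OF p]) (rule circ_dist_nonneg_unit_cube[OF c assms(2)])
  then show ?thesis unfolding raw_weight_def using w_pos[OF assms(1)] by simp
qed

lemma X_eq: "X xs v = raw_weight d p (w v) c (xs v) powr (1 / T)"
  unfolding X_def conn_weight_def raw_weight_def ..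

lemma threshold_pos: "threshold j > 0"
  unfolding threshold_def using scale_pos[of j] by simp

lemma threshold_antimono: "i \<le> j \<Longrightarrow> j \<le> k \<Longrightarrow> threshold j \<le> threshold i"
  unfolding threshold_def using scale_antimono scale_pos T by (intro powr_mono2) (auto intro: less_imp_le)

lemma shell_disjoint: "i < j \<Longrightarrow> shell u i \<inter> shell u j = {}"
proof -
  assume ij: "i < j"
  have "shell u i \<subseteq> near u (scale (Suc i))" unfolding shell_def by auto
  also have "\<dots> \<subseteq> near u (scale j)" by (rule near_antimono[OF scale_antimono]) (use ij in simp)
  finally show ?thesis using ij unfolding shell_def by auto
qed

lemma shell_subset_near: "j < k \<Longrightarrow> shell u j \<subseteq> near u (scale k)"
proof -
  assume j: "j < k"
  have "shell u j \<subseteq> near u (scale (Suc j))" unfolding shell_def by auto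
  also have "\<dots> \<subseteq> near u (scale k)" by (rule near_antimono[OF scale_antimono]) (use j in simp)
  finally show ?thesis .
qed

lemma nth_distinct_lists_less: "l \<in> distinct_lists k {..<n} \<Longrightarrow> j < k \<Longrightarrow> l ! j < n"
  by (auto simp: distinct_lists_def dest!: nth_mem)

lemma shell_event_shell:
  assumes l: "l \<in> distinct_lists k {..<n}" and xs: "xs \<in> shell_event l" and j: "j < k"
  shows "xs (l ! j) \<in> shell (l ! j) j"
proof -
  have "xs (l ! j) \<in> slot l (l ! j)"
    using xs nth_distinct_lists_less[OF l j] by (auto simp: shell_event_def PiE_iff)
  then show ?thesis using l j by (auto simp: slot_def first_index_nth distinct_lists_def)
qed

lemma shell_event_far:
  assumes "xs \<in> shell_event l" "u < n" "u \<notin> set l"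
  shows "xs u \<in> far u"
proof -
  have "xs u \<in> slot l u" using assms(1,2) by (auto simp: shell_event_def PiE_iff)
  then show ?thesis using assms(3) by (simp add: slot_def)
qed

lemma shell_event_disjoint:
  assumes l: "l \<in> distinct_lists k {..<n}" and l': "l' \<in> distinct_lists k {..<n}"
    and xs: "xs \<in> shell_event l" "xs \<in> shell_event l'"
  shows "l = l'"
proof (rule nth_equalityI)
  show "length l = length l'" using l l' by (simp add: distinct_lists_def)
  fix j assume "j < length l"
  then have j: "j < k" using l by (simp add: distinct_lists_def)
  let ?u = "l ! j"
  have in_shell: "xs ?u \<in> shell ?u j" by (rule shell_event_shell[OF l xs(1) j])
  show "l ! j = l' ! j"
  proof (cases "?u \<in> set l'")
    case True
    then obtain i where i: "i < k" "l' ! i = ?u" using l' by (auto simp: distinct_lists_def in_set_conv_nth)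
    have "xs ?u \<in> shell ?u i" using shell_event_shell[OF l' xs(2) i(1)] i(2) by simp
    then have "i = j" using in_shell shell_disjoint[of i j ?u] shell_disjoint[of j i ?u]
      by (cases i j rule: linorder_cases) auto
    then show ?thesis using i by simp
  next
    case False
    then have "xs ?u \<in> far ?u" using shell_event_far[OF xs(2) nth_distinct_lists_less[OF l j]] by simp
    then show ?thesis using shell_subset_near[OF j, of ?u] in_shell unfolding far_def by auto
  qed
qed

lemma sum_indicator_shell_event:
  "(\<Sum>l\<in>distinct_lists k {..<n}. indicator (shell_event l) xs :: real)
    = (if \<exists>l\<in>distinct_lists k {..<n}. xs \<in> shell_event l then 1 else 0)"
proof (cases "\<exists>l\<in>distinct_lists k {..<n}. xs \<in> shell_event l")
  case True
  then obtain l0 where l0: "l0 \<in> distinct_lists k {..<n}" "xs \<in> shell_event l0" by auto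
  have "(\<Sum>l\<in>distinct_lists k {..<n}. indicator (shell_event l) xs :: real)
      = (\<Sum>l\<in>distinct_lists k {..<n}. if l = l0 then 1 else 0)"
    by (intro sum.cong refl) (use shell_event_disjoint l0 in \<open>auto simp: indicator_def\<close>)
  also have "\<dots> = 1" using l0 finite_distinct_lists[of "{..<n}" k] by simp
  finally show ?thesis using True by simp
next
  case False then show ?thesis by (auto simp: indicator_def intro!: sum.neutral)
qed

lemma tail_term_nonneg: "tail_term u x \<ge> 0"
  unfolding tail_term_def using threshold_pos[of k] dyadic_ratio_pos[of T]
  by (intro sum_nonneg add_nonneg_nonneg mult_nonneg_nonneg) auto

lemma tail_weight_nonneg: "tail_weight xs \<ge> 0"
  unfolding tail_weight_def by (intro sum_nonneg tail_term_nonneg)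

lemma X_le_tail_term:
  assumes v: "v < n" and x: "xs v \<in> unit_cube d" and le: "raw_weight d p (w v) c (xs v) \<le> scale k"
  shows "X xs v \<le> tail_term v (xs v)"
proof -
  let ?y = "raw_weight d p (w v) c (xs v)"
  have "X xs v \<le> (\<Sum>i<n. scale k powr (1/T) * ((1/2) powr (1/T)) ^ i * (if ?y > scale k / 2 ^ Suc i then 1 else 0))
      + scale k powr (1/T) * ((1/2) powr (1/T)) ^ n"
    unfolding X_eq by (rule powr_le_dyadic_sum[OF raw_weight_nonneg[OF v x] le]) (use T in simp)
  also have "\<dots> = tail_term v (xs v)"
    unfolding tail_term_def threshold_def dyadic_ratio_def dyadic_near_def near_def raw_weight_above_def
    using x by (intro arg_cong2[where f="(+)"] sum.cong refl) (auto simp: indicator_def)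
  finally show ?thesis .
qed

context
  fixes l :: "nat list" and xs :: "nat \<Rightarrow> nat \<Rightarrow> real"
  assumes l: "l \<in> distinct_lists k {..<n}" and xs: "xs \<in> shell_event l"
    and cube: "\<And>u. u < n \<Longrightarrow> xs u \<in> unit_cube d"
begin

lemma X_shell_event_listed:
  assumes j: "j < k"
  shows "threshold (Suc j) < X xs (l ! j)" and "0 < j \<Longrightarrow> X xs (l ! j) \<le> threshold j"
proof -
  have lj: "l ! j < n" by (rule nth_distinct_lists_less[OF l j])
  have raw: "raw_weight d p (w (l ! j)) c (xs (l ! j)) > scale (Suc j)"
    "0 < j \<Longrightarrow> raw_weight d p (w (l ! j)) c (xs (l ! j)) \<le> scale j"
    using shell_event_shell[OF l xs j] cube[OF lj]
    unfolding shell_def near_def raw_weight_above_def by auto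
  show "threshold (Suc j) < X xs (l ! j)"
    unfolding threshold_def X_eq using raw(1) scale_pos[of "Suc j"] T by (intro powr_less_mono2) auto
  show "0 < j \<Longrightarrow> X xs (l ! j) \<le> threshold j"
    unfolding threshold_def X_eq using raw(2) raw_weight_nonneg[OF lj cube[OF lj]] T
    by (intro powr_mono2) auto
qed

lemma raw_weight_shell_event_rest:
  assumes v: "v \<in> {..<n} - set l"
  shows "raw_weight d p (w v) c (xs v) \<le> scale k"
proof -
  have "xs v \<in> far v" using shell_event_far[OF xs, of v] v by auto
  then show ?thesis unfolding far_def near_def raw_weight_above_def by auto
qed

lemma X_shell_event_rest: "v \<in> {..<n} - set l \<Longrightarrow> X xs v \<le> threshold k"
  unfolding threshold_def X_eq using raw_weight_shell_event_rest raw_weight_nonneg cube T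
  by (intro powr_mono2) auto

lemma sum_X_shell_event_rest_le: "(\<Sum>v\<in>{..<n} - set l. X xs v) \<le> tail_weight xs"
proof -
  have "(\<Sum>v\<in>{..<n} - set l. X xs v) \<le> (\<Sum>v\<in>{..<n} - set l. tail_term v (xs v))"
    by (rule sum_mono) (use X_le_tail_term cube raw_weight_shell_event_rest in auto)
  also have "\<dots> \<le> tail_weight xs"
    unfolding tail_weight_def by (rule sum_mono2) (auto simp: tail_term_nonneg)
  finally show ?thesis .
qed

lemma nice_prob_given_ge_on_shell_event:
  assumes tail: "tail_weight xs \<le> tail_cutoff d k T * threshold k"
  shows "nice_prob_given d p T k n w xs c \<ge> draw_bound d k T ^ k"
proof -
  have X_nonneg: "X xs v \<ge> 0" for v by (simp add: X_def conn_weight_nonneg)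
  have "nice_seq (X xs) {..<n} l"
    by (rule nice_seq_if_separated[OF l threshold_antimono])
       (auto intro: X_shell_event_listed X_shell_event_rest)
  moreover have "seq_prob (X xs) {..<n} l \<ge> draw_bound d k T ^ k"
    unfolding draw_bound_def
    using tail_cutoff_pos[OF d T, of k] threshold_pos[of k] order_trans[OF sum_X_shell_event_rest_le tail]
    by (intro seq_prob_ge_if_separated[OF l threshold_antimono])
       (auto intro: X_shell_event_listed X_shell_event_rest X_nonneg less_imp_le)
  ultimately show ?thesis
    using seq_prob_le_nice_prob_given[OF l] unfolding X_def by (meson order_trans)
qed

end

text \<open>Where the leftover weight exceeds its cutoff the penalty term makes the minorant
  non-positive, so only the expectation of \<open>tail_weight\<close> enters its integral.\<close>
definition minorant :: "(nat \<Rightarrow> nat \<Rightarrow> real) \<Rightarrow> real" where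
  "minorant xs = draw_bound d k T ^ k
      * ((\<Sum>l\<in>distinct_lists k {..<n}. indicator (shell_event l) xs)
         - tail_weight xs / (tail_cutoff d k T * threshold k))"

lemma minorant_le_nice_prob_given:
  assumes cube: "\<And>u. u < n \<Longrightarrow> xs u \<in> unit_cube d"
  shows "minorant xs \<le> nice_prob_given d p T k n w xs c"
proof -
  let ?\<theta> = "draw_bound d k T" and ?B = "tail_cutoff d k T * threshold k"
  have \<theta>: "?\<theta> > 0" by (rule draw_bound_pos[OF d T])
  have B: "?B > 0" using tail_cutoff_pos[OF d T] threshold_pos[of k] by simp
  have penalty: "tail_weight xs / ?B \<ge> 0" using tail_weight_nonneg B by simp
  show ?thesis
  proof (cases "(\<exists>l\<in>distinct_lists k {..<n}. xs \<in> shell_event l) \<and> tail_weight xs \<le> ?B")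
    case True
    then obtain l where "l \<in> distinct_lists k {..<n}" "xs \<in> shell_event l" by auto
    then have "?\<theta> ^ k \<le> nice_prob_given d p T k n w xs c"
      using nice_prob_given_ge_on_shell_event cube True by blast
    moreover have "?\<theta> ^ k * (1 - tail_weight xs / ?B) \<le> ?\<theta> ^ k"
      using penalty \<theta> by (simp add: mult_left_le)
    ultimately show ?thesis using True by (simp add: minorant_def sum_indicator_shell_event)
  next
    case False
    then have "(\<Sum>l\<in>distinct_lists k {..<n}. indicator (shell_event l) xs) - tail_weight xs / ?B \<le> 0"
      using B penalty by (auto simp: sum_indicator_shell_event)
    then have "minorant xs \<le> 0" unfolding minorant_def using \<theta> by (simp add: mult_nonneg_nonpos)
    then show ?thesis using nice_prob_given_nonneg[of d p T k n w xs c] by linarith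
  qed
qed

lemma dyadic_near_sets [measurable]: "dyadic_near u i \<in> sets (torus d)"
  unfolding dyadic_near_def by simp

lemma measure_dyadic_near_le: "u < n \<Longrightarrow> measure (torus d) (dyadic_near u i) \<le> w u * 2 ^ i / W"
proof -
  assume u: "u < n"
  have "measure (torus d) (dyadic_near u i) \<le> 6 ^ d * (w u / (scale k / 2 ^ Suc i))"
    unfolding dyadic_near_def using scale_pos[of k] by (intro measure_near_le[OF u]) simp
  also have "\<dots> = w u * 2 ^ i / W" unfolding scale_k using W_ge_1 by (simp add: field_simps)
  finally show ?thesis .
qed

lemma tail_term_measurable [measurable]: "tail_term u \<in> borel_measurable (torus d)"
  unfolding tail_term_def by measurable

lemma integrable_tail_term: "integrable (torus d) (tail_term u)"
proof -
  interpret prob_space "torus d" by (rule prob_space_torus)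
  show ?thesis unfolding tail_term_def
    by (intro Bochner_Integration.integrable_add Bochner_Integration.integrable_sum
        Bochner_Integration.integrable_mult_right integrable_real_indicator)
       (auto simp: emeasure_eq_measure)
qed

lemma integral_tail_term:
  "integral\<^sup>L (torus d) (tail_term u)
    = (\<Sum>i<n. threshold k * dyadic_ratio T ^ i * measure (torus d) (dyadic_near u i))
      + threshold k * dyadic_ratio T ^ n"
proof -
  interpret prob_space "torus d" by (rule prob_space_torus)
  have indicator: "integrable (torus d) (indicator (dyadic_near u i) :: _ \<Rightarrow> real)" for i
    by (rule integrable_real_indicator) (auto simp: emeasure_eq_measure)
  have "integral\<^sup>L (torus d) (tail_term u)
      = (\<integral>x. (\<Sum>i<n. threshold k * dyadic_ratio T ^ i * indicator (dyadic_near u i) x) \<partial>torus d)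
        + threshold k * dyadic_ratio T ^ n"
  proof -
    have "integrable (torus d) (\<lambda>x. \<Sum>i<n. threshold k * dyadic_ratio T ^ i * indicator (dyadic_near u i) x)"
      by (intro Bochner_Integration.integrable_sum Bochner_Integration.integrable_mult_right indicator)
    then show ?thesis
      unfolding tail_term_def by (subst Bochner_Integration.integral_add) (auto simp: prob_space)
  qed
  also have "(\<integral>x. (\<Sum>i<n. threshold k * dyadic_ratio T ^ i * indicator (dyadic_near u i) x) \<partial>torus d)
      = (\<Sum>i<n. threshold k * dyadic_ratio T ^ i * measure (torus d) (dyadic_near u i))"
    using indicator by (subst Bochner_Integration.integral_sum) (auto simp: emeasure_eq_measure)
  finally show ?thesis .
qed

lemma integral_tail_term_le:
  assumes u: "u < n"
  shows "integral\<^sup>L (torus d) (tail_term u)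
    \<le> threshold k * ((\<Sum>i<n. (2 * dyadic_ratio T) ^ i) * (w u / W) + dyadic_ratio T ^ n)"
proof -
  let ?g = "dyadic_ratio T"
  have "integral\<^sup>L (torus d) (tail_term u) \<le> (\<Sum>i<n. threshold k * ?g ^ i * (w u * 2 ^ i / W)) + threshold k * ?g ^ n"
    unfolding integral_tail_term using threshold_pos[of k] dyadic_ratio_pos[of T]
    by (intro add_right_mono sum_mono mult_left_mono measure_dyadic_near_le[OF u]) auto
  also have "\<dots> = threshold k * ((\<Sum>i<n. (2 * ?g) ^ i) * (w u / W) + ?g ^ n)"
    by (simp add: power_mult_distrib sum_distrib_left sum_distrib_right algebra_simps)
  finally show ?thesis .
qed

text \<open>The factor \<open>n\<close> coming from \<open>n\<close> variables is absorbed by the remainder \<open>dyadic_ratio T ^ n \<le> 2\<^sup>-\<^sup>n\<close>.\<close>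
lemma integral_tail_weight_le: "(\<integral>xs. tail_weight xs \<partial>positions) \<le> threshold k * tail_const T"
proof -
  let ?g = "dyadic_ratio T"
  have g: "?g > 0" "2 * ?g < 1" using dyadic_ratio_pos dyadic_ratio_less_half[OF T] by auto
  have "(\<integral>xs. tail_weight xs \<partial>positions) = (\<Sum>u<n. integral\<^sup>L (torus d) (tail_term u))"
    unfolding tail_weight_def positions_def
    by (subst Bochner_Integration.integral_sum)
       (auto intro: integrable_PiM_torus_component integrable_tail_term simp: integral_PiM_torus_component)
  also have "\<dots> \<le> (\<Sum>u<n. threshold k * ((\<Sum>i<n. (2 * ?g) ^ i) * (w u / W) + ?g ^ n))"
    by (intro sum_mono integral_tail_term_le) simp
  also have "\<dots> = threshold k * (\<Sum>u<n. (\<Sum>i<n. (2 * ?g) ^ i) * (w u / W) + ?g ^ n)"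
    by (rule sum_distrib_left[symmetric])
  also have "(\<Sum>u<n. (\<Sum>i<n. (2 * ?g) ^ i) * (w u / W) + ?g ^ n)
      = (\<Sum>i<n. (2 * ?g) ^ i) * ((\<Sum>u<n. w u) / W) + real n * ?g ^ n"
    by (simp add: sum.distrib sum_distrib_left[symmetric] sum_divide_distrib[symmetric])
  also have "(\<Sum>u<n. w u) / W = 1" using W_ge_1 unfolding W_def by simp
  also have "(\<Sum>i<n. (2 * ?g) ^ i) \<le> 1 / (1 - 2 * ?g)"
  proof -
    have "(\<Sum>i<n. (2 * ?g) ^ i) = (1 - (2 * ?g) ^ n) / (1 - 2 * ?g)"
      using g sum_gp_strict[of "2 * ?g" n] by (simp del: power_mult_distrib)
    also have "\<dots> \<le> 1 / (1 - 2 * ?g)" using g by (intro divide_right_mono) auto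
    finally show ?thesis .
  qed
  also have "real n * ?g ^ n \<le> 1"
  proof -
    have "real n * ?g ^ n \<le> real n * (1/2) ^ n" using g by (intro mult_left_mono power_mono) auto
    also have "\<dots> \<le> 1" using less_exp[of n] by (simp add: field_simps)
    finally show ?thesis .
  qed
  finally show ?thesis using threshold_pos[of k] unfolding tail_const_def
    by (simp add: mult_left_mono)
qed

lemma integrable_tail_weight: "integrable positions tail_weight"
  unfolding tail_weight_def[abs_def] positions_def
  by (intro Bochner_Integration.integrable_sum integrable_PiM_torus_component integrable_tail_term) auto

lemma integrable_nice_prob_given: "integrable positions (\<lambda>xs. nice_prob_given d p T k n w xs c)"
proof -
  interpret prob_space positions by (rule prob_space_positions)
  have "(\<lambda>xs. nice_prob_given d p T k n w xs c) \<in> borel_measurable positions"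
    unfolding positions_def by (rule nice_prob_given_measurable) auto
  moreover have "\<bar>nice_prob_given d p T k n w xs c\<bar> \<le> 1" for xs
    using nice_prob_given_nonneg nice_prob_given_le_1 by (simp add: abs_le_iff)
  ultimately show ?thesis by (intro integrable_const_bound[where B=1]) auto
qed

lemma AE_positions_unit_cube: "AE xs in positions. \<forall>u\<in>{..<n}. xs u \<in> unit_cube d"
proof (rule eventually_ball_finite)
  show "\<forall>u\<in>{..<n}. AE xs in positions. xs u \<in> unit_cube d"
    unfolding positions_def using AE_unit_cube
    by (auto intro: AE_PiM_component[rotated 2] simp: prob_space_torus)
qed simp

lemma integral_indicator_shell_events:
  "(\<integral>xs. (\<Sum>l\<in>distinct_lists k {..<n}. indicator (shell_event l) xs) \<partial>positions)
    = (\<Sum>l\<in>distinct_lists k {..<n}. measure positions (shell_event l))"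
proof -
  interpret prob_space positions by (rule prob_space_positions)
  show ?thesis by (subst Bochner_Integration.integral_sum) (auto simp: emeasure_eq_measure)
qed

lemma integral_minorant:
  "integrable positions minorant"
  "(\<integral>xs. minorant xs \<partial>positions) = draw_bound d k T ^ k
      * ((\<Sum>l\<in>distinct_lists k {..<n}. measure positions (shell_event l))
         - (\<integral>xs. tail_weight xs \<partial>positions) / (tail_cutoff d k T * threshold k))"
proof -
  interpret prob_space positions by (rule prob_space_positions)
  let ?I = "\<lambda>xs. \<Sum>l\<in>distinct_lists k {..<n}. indicator (shell_event l) xs :: real"
  let ?B = "tail_cutoff d k T * threshold k"
  have int_I: "integrable positions ?I"
    by (intro Bochner_Integration.integrable_sum integrable_real_indicator) (auto simp: emeasure_eq_measure)
  have int_tail: "integrable positions (\<lambda>xs. tail_weight xs / ?B)"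
    using integrable_tail_weight by simp
  show "integrable positions minorant"
    unfolding minorant_def[abs_def] using int_I int_tail
    by (intro Bochner_Integration.integrable_mult_right Bochner_Integration.integrable_diff)
  show "(\<integral>xs. minorant xs \<partial>positions) = draw_bound d k T ^ k
      * ((\<Sum>l\<in>distinct_lists k {..<n}. measure positions (shell_event l))
         - (\<integral>xs. tail_weight xs \<partial>positions) / ?B)"
    unfolding minorant_def integral_mult_right_zero Bochner_Integration.integral_diff[OF int_I int_tail]
      integral_divide_zero integral_indicator_shell_events ..
qed

lemma integral_nice_prob_given_ge: "nice_const d k T \<le> (\<integral>xs. nice_prob_given d p T k n w xs c \<partial>positions)"
proof -
  let ?B = "tail_cutoff d k T * threshold k"
  have B: "?B > 0" using tail_cutoff_pos[OF d T] threshold_pos[of k] by simp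
  have tail_small: "(\<integral>xs. tail_weight xs \<partial>positions) / ?B \<le> shell_mass d k / 2"
  proof -
    have "(\<integral>xs. tail_weight xs \<partial>positions) / ?B \<le> (threshold k * tail_const T) / ?B"
      using integral_tail_weight_le B by (intro divide_right_mono) auto
    also have "\<dots> = shell_mass d k / 2"
      using threshold_pos[of k] shell_mass_pos[OF d, of k] tail_const_pos[OF T]
      unfolding tail_cutoff_def by simp
    finally show ?thesis .
  qed
  have "AE xs in positions. minorant xs \<le> nice_prob_given d p T k n w xs c"
    using AE_positions_unit_cube by eventually_elim (rule minorant_le_nice_prob_given, simp)
  then have minorant_le: "(\<integral>xs. minorant xs \<partial>positions) \<le> (\<integral>xs. nice_prob_given d p T k n w xs c \<partial>positions)"
    by (rule integral_mono_AE[OF integral_minorant(1) integrable_nice_prob_given])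
  have "nice_const d k T = draw_bound d k T ^ k * (shell_mass d k - shell_mass d k / 2)"
    unfolding nice_const_def by simp
  also have "\<dots> \<le> draw_bound d k T ^ k * ((\<Sum>l\<in>distinct_lists k {..<n}. measure positions (shell_event l))
                  - (\<integral>xs. tail_weight xs \<partial>positions) / ?B)"
    using sum_measure_shell_event_ge tail_small draw_bound_pos[OF d T, of k] by (intro mult_left_mono) auto
  also have "\<dots> \<le> (\<integral>xs. nice_prob_given d p T k n w xs c \<partial>positions)"
    using minorant_le by (simp only: integral_minorant(2))
  finally show ?thesis .
qed

end

section \<open>Averaging over the clause position\<close>

context
  fixes M :: "'a measure" and g :: "'a \<Rightarrow> nat \<Rightarrow> real" and d n :: nat
  assumes M: "prob_space M" and g: "g \<in> measurable M (torus d)"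
begin

abbreviation (input) pair_space :: "('a \<times> (nat \<Rightarrow> nat \<Rightarrow> real)) measure" where
  "pair_space \<equiv> M \<Otimes>\<^sub>M PiM {..<n} (\<lambda>_. torus d)"

lemma prob_space_pair_space: "prob_space pair_space"
  by (intro prob_space_pair M prob_space_PiM prob_space_torus)

lemma integrable_nice_prob_given_pair:
  "integrable pair_space (\<lambda>z. nice_prob_given d p T k n w (snd z) (g (fst z)))"
proof -
  interpret prob_space pair_space by (rule prob_space_pair_space)
  have [measurable]: "(\<lambda>x. g x i) \<in> borel_measurable M" for i
    using measurable_compose[OF g measurable_torus_component] by blast
  have "(\<lambda>z. nice_prob_given d p T k n w (snd z) (g (fst z))) \<in> borel_measurable pair_space"
    by (rule nice_prob_given_measurable) auto
  moreover have "\<bar>nice_prob_given d p T k n w xs x\<bar> \<le> 1" for xs x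
    using nice_prob_given_nonneg nice_prob_given_le_1 by (simp add: abs_le_iff)
  ultimately show ?thesis by (intro integrable_const_bound[where B=1]) auto
qed

lemma integral_nice_prob_given_pair_le_1:
  "(\<integral>z. nice_prob_given d p T k n w (snd z) (g (fst z)) \<partial>pair_space) \<le> 1"
proof -
  interpret prob_space pair_space by (rule prob_space_pair_space)
  have "(\<integral>z. nice_prob_given d p T k n w (snd z) (g (fst z)) \<partial>pair_space) \<le> (\<integral>z. 1 \<partial>pair_space)"
    using integrable_nice_prob_given_pair by (rule integral_mono) (auto simp: nice_prob_given_le_1)
  then show ?thesis by (simp add: prob_space)
qed

lemma integral_nice_prob_given_pair_ge:
  assumes cube: "AE x in M. g x \<in> unit_cube d"
    and "d \<ge> 1" "p \<ge> 1" "0 < T" "T < 1" "\<And>v. v < n \<Longrightarrow> w v \<ge> 1" "n \<ge> 1"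
    and "Max (w ` {..<n}) / (\<Sum>v<n. w v) \<le> max_weight_ratio d k"
  shows "nice_const d k T \<le> (\<integral>z. nice_prob_given d p T k n w (snd z) (g (fst z)) \<partial>pair_space)"
proof -
  let ?f = "\<lambda>z. nice_prob_given d p T k n w (snd z) (g (fst z))"
  interpret M: prob_space M by (rule M)
  interpret pair_sigma_finite M "PiM {..<n} (\<lambda>_. torus d)"
    by (simp add: pair_sigma_finite_def prob_space_imp_sigma_finite M prob_space_PiM prob_space_torus)
  have "AE x in M. nice_const d k T \<le> (\<integral>y. ?f (x, y) \<partial>PiM {..<n} (\<lambda>_. torus d))"
    using cube
  proof eventually_elim
    case (elim x)
    interpret clause_setting d p T k n w "g x"
      by unfold_locales (use elim assms in \<open>auto simp: unit_cube_def PiE_iff\<close>)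
    show ?case using integral_nice_prob_given_ge unfolding positions_def by simp
  qed
  then have "(\<integral>x. nice_const d k T \<partial>M) \<le> (\<integral>x. (\<integral>y. ?f (x, y) \<partial>PiM {..<n} (\<lambda>_. torus d)) \<partial>M)"
    by (intro integral_mono_AE integrable_fst'[OF integrable_nice_prob_given_pair]) auto
  then show ?thesis
    using integral_fst'[OF integrable_nice_prob_given_pair] by (simp add: M.prob_space)
qed

end

lemma clause_nice_prob_ge:
  assumes "d \<ge> 1" "p \<ge> 1" "0 < T" "T < 1" "\<And>v. v < n \<Longrightarrow> w v \<ge> 1" "n \<ge> 1"
    and "Max (w ` {..<n}) / (\<Sum>v<n. w v) \<le> max_weight_ratio d k"
  shows "nice_const d k T \<le> clause_nice_prob d p T k n w"
  using integral_nice_prob_given_pair_ge[of "torus d" "\<lambda>x. x", OF prob_space_torus _ AE_unit_cube assms]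
  unfolding clause_nice_prob_def by simp

lemma expected_nice_bounds:
  assumes "d \<ge> 1" "p \<ge> 1" "0 < T" "T < 1" "\<And>v. v < n \<Longrightarrow> w v \<ge> 1" "n \<ge> 1"
    and "Max (w ` {..<n}) / (\<Sum>v<n. w v) \<le> max_weight_ratio d k"
  shows "nice_const d k T * real m \<le> expected_nice d p T k n m w \<and> expected_nice d p T k n m w \<le> real m"
proof -
  let ?C = "PiM {..<m} (\<lambda>_. torus d)"
  let ?f = "\<lambda>j z. nice_prob_given d p T k n w (snd z) (fst z j)"
  have prob_C: "prob_space ?C" by (intro prob_space_PiM prob_space_torus)
  have component: "(\<lambda>cs. cs j) \<in> measurable ?C (torus d)" if "j < m" for j
    using that by (intro measurable_component_singleton) simp
  have cube: "AE cs in ?C. cs j \<in> unit_cube d" if "j < m" for j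
    using that by (intro AE_PiM_component) (auto simp: prob_space_torus AE_unit_cube)
  have "expected_nice d p T k n m w = (\<Sum>j<m. \<integral>z. ?f j z \<partial>(?C \<Otimes>\<^sub>M PiM {..<n} (\<lambda>_. torus d)))"
    unfolding expected_nice_def
    by (intro Bochner_Integration.integral_sum integrable_nice_prob_given_pair[OF prob_C component]) simp
  moreover have "(\<Sum>j<m. nice_const d k T) \<le> (\<Sum>j<m. \<integral>z. ?f j z \<partial>(?C \<Otimes>\<^sub>M PiM {..<n} (\<lambda>_. torus d)))"
    by (intro sum_mono integral_nice_prob_given_pair_ge[OF prob_C component cube assms]) auto
  moreover have "(\<Sum>j<m. \<integral>z. ?f j z \<partial>(?C \<Otimes>\<^sub>M PiM {..<n} (\<lambda>_. torus d))) \<le> (\<Sum>j<m. 1)"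
    by (intro sum_mono integral_nice_prob_given_pair_le_1[OF prob_C component]) simp
  ultimately show ?thesis by (simp add: mult.commute)
qed

theorem mainTheorem10:
  fixes d k :: nat and p :: enat and T :: real
    and w :: "nat \<Rightarrow> nat \<Rightarrow> real" and m :: "nat \<Rightarrow> nat"
  assumes d: "d \<ge> 1"
    and p: "p \<ge> 1"
    and T: "0 < T" "T < 1"
    and w_ge: "\<And>n v. v < n \<Longrightarrow> w n v \<ge> 1"
    and w_min: "\<And>n. n \<ge> 1 \<Longrightarrow> (\<exists>v<n. w n v = 1)"
    and w_max: "(\<lambda>n. Max ((w n) ` {..<n}) / (\<Sum>v<n. w n v)) \<longlonglongrightarrow> 0"
  shows "(\<exists>c>0. \<forall>\<^sub>F n in sequentially. clause_nice_prob d p T k n (w n) \<ge> c)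
       \<and> (\<exists>c>0. \<exists>C>0. \<forall>\<^sub>F n in sequentially.
            c * real (m n) \<le> expected_nice d p T k n (m n) (w n)
          \<and> expected_nice d p T k n (m n) (w n) \<le> C * real (m n))"
proof -
  have "\<forall>\<^sub>F n in sequentially. Max ((w n) ` {..<n}) / (\<Sum>v<n. w n v) < max_weight_ratio d k"
    using order_tendstoD(2)[OF w_max max_weight_ratio_pos[OF d]] .
  then have large: "\<forall>\<^sub>F n in sequentially. n \<ge> 1 \<and> Max ((w n) ` {..<n}) / (\<Sum>v<n. w n v) \<le> max_weight_ratio d k"
    using eventually_ge_at_top[of 1] by eventually_elim auto
  have "\<forall>\<^sub>F n in sequentially. nice_const d k T \<le> clause_nice_prob d p T k n (w n)"
    using large by eventually_elim (use clause_nice_prob_ge[OF d p T] w_ge in auto)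
  moreover have "\<forall>\<^sub>F n in sequentially. nice_const d k T * real (m n) \<le> expected_nice d p T k n (m n) (w n)
      \<and> expected_nice d p T k n (m n) (w n) \<le> 1 * real (m n)"
    using large by eventually_elim (use expected_nice_bounds[OF d p T] w_ge in auto)
  ultimately show ?thesis using nice_const_pos[OF d T] zero_less_one by blast
qed

end
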